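(* Assume the standing hypotheses (H), (L) and (g) below, and let $m_0,m_1>0$ be constants such that the following holds: for all $u_1,u_2\in W^{1,1}(0,T;X)$, all $x_0^i\in X$ with $x_0^i\in Z(g(0,u_i(0),u_i(0)-x_0^i))$ and all $\eta_i\in\Omega_{x_0^i}(u_i)$ ($i=1,2$), the solutions $\xi_i$ of the (non-state-dependent) sweeping process with inputs $(u_i,w_i)$, $w_i(t):=g(t,u_i(t),\eta_i(t))$, and initial conditions $x_0^i$, with $x_i=u_i-\xi_i$, satisfy for a.e. $t\in(0,T)$ $$|\dot\xi_1-\dot\xi_2|+\frac1c\frac{\mathrm d}{\mathrm dt}|G(x_1,w_1)-G(x_2,w_2)|\le m_1|\dot u_1-\dot u_2|+\delta|\dot\eta_1-\dot\eta_2|+m_0(a+b+|\dot u_1|)\big(|u_1-u_2|+|\xi_1-\xi_2|+|\eta_1-\eta_2|\big)$$ (all functions evaluated at $t$). Then for every $R>2m_0\int_0^T(a(t)+b(t))\,\mathrm{d}t$ there exists $K(R)>0$ such that whenever $u_1,u_2\in W^{1,1}(0,T;X)$ satisfy $\int_0^T|\dot u_1(t)|\,\mathrm{d}t\le\frac{R}{2m_0}-\int_0^T(a(t)+b(t))\,\mathrm{d}t$ and $x_0^i\in X$ satisfy $x_0^i\in Z(g(0,u_i(0),u_i(0)-x_0^i))$ for $i=1,2$, the solutions $\xi_i\in\Omega_{x_0^i}(u_i)$ of the state-dependent sweeping process with inputs $u_i$ and initial conditions $x_0^i$ satisfy $$\int_0^T|\dot\xi_1(t)-\dot\xi_2(t)|\,\mathrm{d}t\le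 K(R)\Big(|x_0^1-x_0^2|+|u_1(0)-u_2(0)|+\int_0^T|\dot u_1(t)-\dot u_2(t)|\,\mathrm{d}t\Big).$$
   Context: $T>0$. $X$ is a real Hilbert space with inner product $\langle\cdot,\cdot\rangle$ and norm $|x|=\sqrt{\langle x,x\rangle}$; $W$ is a real Banach space with norm $|\cdot|_W$, dual $W'$ (norm $|\cdot|_{W'}$), duality pairing $\langle v,f\rangle_W$; $\mathcal L(X,W)$ bounded linear operators with operator norm. $G:X\times W\to[0,\infty)$ is locally Lipschitz and $Z(w):=\{x\in X: G(x,w)\le 1\}$; $\partial Z(w)$ its boundary, $\mathrm{dist}(x,S)=\inf_{s\in S}|x-s|$. Partial gradients: $\nabla_xG(x,w)\in X$ with $\langle\nabla_xG(x,w),y\rangle=\lim_{t\to0}\frac1t(G(x+ty,w)-G(x,w))$; $\nabla_wG(x,w)\in W'$ with $\langle v,\nabla_wG(x,w)\rangle_W=\lim_{t\to0}\frac1t(G(x,w+tv)-G(x,w))$. (H): $\nabla_xG(x,w)$ exists for all $(x,w)$; there are positive constants $\lambda,c,L$ and functions $\mu_1:W\times[0,\infty)\to[0,\infty)$, $\mu_2:[0,\infty)\to[0,\infty)$ with $\mu_1(w,0)=\mu_2(0)=0$, $\lim_{s\to\infty}\mu_1(w,s)=\lim_{s\to\infty}\mu_2(s)=\infty$ for every $w$, such that for all $x,y,z\in X$, $w,w'\in W$: (i) $G(x,w)=1\Rightarrow|\nabla_xG(x,w)|\ge c$; (ii) $|\nabla_xG(x,w)-\nabla_xG(y,w)|\le\mu_1(w,|x-y|)$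 if $x,y\in Z(w)$; (iii) $\langle\nabla_xG(x,w)-\nabla_xG(z,w),x-z\rangle\ge-\lambda|x-z|^2$ if $x\in\partial Z(w)$, $z\in Z(w)$; (iv) $|G(x,w)-G(x,w')|\le L|w-w'|_W$; (v) for $\rho>0$, $\mathrm{dist}(x,Z(w))\ge\rho\Rightarrow G(x,w)-1\ge\mu_2(\rho)$. Set $r:=c/\lambda$. (L): $\nabla_xG,\nabla_wG$ exist on $X\times W$; positive constants $K_0,K_1,C_0,C_1$ with $|\nabla_xG|\le K_0$, $|\nabla_wG|_{W'}\le K_1$, $|\nabla_xG(x,w)-\nabla_xG(x',w')|\le C_0(|x-x'|+|w-w'|_W)$, $|\nabla_wG(x,w)-\nabla_wG(x',w')|_{W'}\le C_1(|x-x'|+|w-w'|_W)$. (g): $g:[0,T]\times X\times X\to W$ continuous with partial derivatives $\partial_tg,\partial_ug,\partial_\xi g$ and $a,b\in L^1(0,T)$, constants $\gamma,\omega,C_\xi,C_u>0$ such that for all $u,v,\xi,\eta\in X$, a.e. $t$: $|\partial_\xi g|_{\mathcal L(X,W)}\le\gamma$, $|\partial_ug|_{\mathcal L(X,W)}\le\omega$, $|\partial_tg|_W\le a(t)$, $|\partial_\xi g(t,u,\xi)-\partial_\xi g(t,v,\eta)|_{\mathcal L(X,W)}\le C_\xi(|u-v|+|\xi-\eta|)$, $|\partial_ug(t,u,\xi)-\partial_ug(t,v,\eta)|_{\mathcal L(X,W)}\le C_u(|u-v|+|\xi-\eta|)$, $|\partial_tg(t,u,\xi)-\partial_tg(t,v,\eta)|_W\le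 b(t)(|u-v|+|\xi-\eta|)$; and $\delta:=K_1\gamma/c<1$. Sweeping process with inputs $(u,w)\in W^{1,1}(0,T;X)\times W^{1,1}(0,T;W)$, initial condition $x_0\in Z(w(0))$: $\xi\in W^{1,1}(0,T;X)$ with $x:=u-\xi$, $x(t)\in Z(w(t))$ for all $t$, $\langle x(t)-z,\dot\xi(t)\rangle+\frac{|\dot\xi(t)|}{2r}|x(t)-z|^2\ge0$ for all $z\in Z(w(t))$ a.e. $t$, $x(0)=x_0$ (unique under (H)). State-dependent sweeping process with input $u$ and initial condition $x_0$ (where $x_0\in Z(g(0,u(0),u(0)-x_0))$): the same with $w(t)$ replaced by $g(t,u(t),\xi(t))$. $\Omega_{x_0}(u)$: set of $\eta\in W^{1,1}(0,T;X)$ with $\eta(0)=u(0)-x_0$ and $|\dot\eta(t)|\le\frac1{1-\delta}((1+\frac{\omega K_1}{c})|\dot u(t)|+\frac{K_1}{c}a(t))$ a.e.; the state-dependent problem has a unique solution in $\Omega_{x_0}(u)$. *)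

theory Defs
  imports "HOL-Analysis.Analysis"
begin

text \<open>Hilbert space X: type class real_inner + banach (complete); Banach space W: class banach.\<close>

definition ae_on :: "real set \<Rightarrow> (real \<Rightarrow> bool) \<Rightarrow> bool" where
  "ae_on S P \<longleftrightarrow> (\<exists>N. negligible N \<and> (\<forall>t\<in>S - N. P t))"

definition W11 :: "real \<Rightarrow> (real \<Rightarrow> 'a::banach) \<Rightarrow> (real \<Rightarrow> 'a) \<Rightarrow> bool" where
  "W11 T f f' \<longleftrightarrow>
     f' integrable_on {0..T} \<and> (\<lambda>t. norm (f' t)) integrable_on {0..T} \<and>
     (\<forall>t\<in>{0..T}. f t = f 0 + integral {0..t} f') \<and>
     ae_on {0..T} (\<lambda>t. (f has_vector_derivative f' t) (at t))"

definition Zset :: "('x \<Rightarrow> 'w \<Rightarrow> real) \<Rightarrow> 'w \<Rightarrow> 'x set" where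
  "Zset G w = {x. G x w \<le> 1}"

definition sweep_sol ::
  "('x::{real_inner,banach} \<Rightarrow> 'w \<Rightarrow> real) \<Rightarrow> real \<Rightarrow> real \<Rightarrow> (real \<Rightarrow> 'x) \<Rightarrow> (real \<Rightarrow> 'w)
    \<Rightarrow> 'x \<Rightarrow> (real \<Rightarrow> 'x) \<Rightarrow> (real \<Rightarrow> 'x) \<Rightarrow> bool" where
  "sweep_sol G r T u w x0 xi xi' \<longleftrightarrow>
     W11 T xi xi' \<and>
     (\<forall>t\<in>{0..T}. u t - xi t \<in> Zset G (w t)) \<and>
     ae_on {0..T} (\<lambda>t. \<forall>z\<in>Zset G (w t).
        inner (u t - xi t - z) (xi' t) + norm (xi' t) / (2 * r) * (norm (u t - xi t - z))\<^sup>2 \<ge> 0) \<and>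
     u 0 - xi 0 = x0"

definition in_Omega ::
  "real \<Rightarrow> real \<Rightarrow> real \<Rightarrow> real \<Rightarrow> real \<Rightarrow> (real \<Rightarrow> real) \<Rightarrow> (real \<Rightarrow> 'x::{real_inner,banach})
    \<Rightarrow> (real \<Rightarrow> 'x) \<Rightarrow> 'x \<Rightarrow> (real \<Rightarrow> 'x) \<Rightarrow> (real \<Rightarrow> 'x) \<Rightarrow> bool" where
  "in_Omega T \<delta> \<omega> K1 c a u u' x0 eta eta' \<longleftrightarrow>
     W11 T eta eta' \<and> eta 0 = u 0 - x0 \<and>
     ae_on {0..T} (\<lambda>t. norm (eta' t) \<le>
        1 / (1 - \<delta>) * ((1 + \<omega> * K1 / c) * norm (u' t) + K1 / c * a t))"

definition hyp_H ::
  "('x::{real_inner,banach} \<Rightarrow> 'w::banach \<Rightarrow> real) \<Rightarrow> ('x \<Rightarrow> 'w \<Rightarrow> 'x) \<Rightarrow> real \<Rightarrow> real \<Rightarrow> real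
    \<Rightarrow> ('w \<Rightarrow> real \<Rightarrow> real) \<Rightarrow> (real \<Rightarrow> real) \<Rightarrow> bool" where
  "hyp_H G Gx lam c L \<mu>1 \<mu>2 \<longleftrightarrow>
     (\<forall>x w. G x w \<ge> 0) \<and>
     (\<forall>x w. \<exists>e>0. \<exists>K. \<forall>x1 w1 x2 w2.
         norm (x1 - x) < e \<and> norm (w1 - w) < e \<and> norm (x2 - x) < e \<and> norm (w2 - w) < e \<longrightarrow>
         \<bar>G x1 w1 - G x2 w2\<bar> \<le> K * (norm (x1 - x2) + norm (w1 - w2))) \<and>
     (\<forall>x w y. ((\<lambda>s. G (x + s *\<^sub>R y) w) has_real_derivative inner (Gx x w) y) (at 0)) \<and>
     lam > 0 \<and> c > 0 \<and> L > 0 \<and>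
     (\<forall>w. \<mu>1 w 0 = 0 \<and> (\<forall>s\<ge>0. \<mu>1 w s \<ge> 0) \<and> filterlim (\<mu>1 w) at_top at_top) \<and>
     \<mu>2 0 = 0 \<and> (\<forall>s\<ge>0. \<mu>2 s \<ge> 0) \<and> filterlim \<mu>2 at_top at_top \<and>
     (\<forall>x w. G x w = 1 \<longrightarrow> norm (Gx x w) \<ge> c) \<and>
     (\<forall>x y w. x \<in> Zset G w \<and> y \<in> Zset G w \<longrightarrow> norm (Gx x w - Gx y w) \<le> \<mu>1 w (norm (x - y))) \<and>
     (\<forall>x z w. x \<in> frontier (Zset G w) \<and> z \<in> Zset G w \<longrightarrow>
         inner (Gx x w - Gx z w) (x - z) \<ge> - lam * (norm (x - z))\<^sup>2) \<and>
     (\<forall>x w w'. \<bar>G x w - G x w'\<bar> \<le> L * norm (w - w')) \<and>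
     (\<forall>x w \<rho>. \<rho> > 0 \<and> infdist x (Zset G w) \<ge> \<rho> \<longrightarrow> G x w - 1 \<ge> \<mu>2 \<rho>)"

definition hyp_L ::
  "('x::{real_inner,banach} \<Rightarrow> 'w::banach \<Rightarrow> real) \<Rightarrow> ('x \<Rightarrow> 'w \<Rightarrow> 'x) \<Rightarrow> ('x \<Rightarrow> 'w \<Rightarrow> 'w \<Rightarrow> real)
    \<Rightarrow> real \<Rightarrow> real \<Rightarrow> real \<Rightarrow> real \<Rightarrow> bool" where
  "hyp_L G Gx Gw K0 K1 C0 C1 \<longleftrightarrow>
     (\<forall>x w. bounded_linear (Gw x w)) \<and>
     (\<forall>x w v. ((\<lambda>s. G x (w + s *\<^sub>R v)) has_real_derivative Gw x w v) (at 0)) \<and>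
     K0 > 0 \<and> K1 > 0 \<and> C0 > 0 \<and> C1 > 0 \<and>
     (\<forall>x w. norm (Gx x w) \<le> K0) \<and>
     (\<forall>x w. onorm (Gw x w) \<le> K1) \<and>
     (\<forall>x w x' w'. norm (Gx x w - Gx x' w') \<le> C0 * (norm (x - x') + norm (w - w'))) \<and>
     (\<forall>x w x' w'. onorm (\<lambda>v. Gw x w v - Gw x' w' v) \<le> C1 * (norm (x - x') + norm (w - w')))"

text \<open>Hypothesis (g) (without the condition delta < 1, stated separately).\<close>
definition hyp_g ::
  "real \<Rightarrow> (real \<Rightarrow> 'x::{real_inner,banach} \<Rightarrow> 'x \<Rightarrow> 'w::banach) \<Rightarrow> (real \<Rightarrow> 'x \<Rightarrow> 'x \<Rightarrow> 'w)
    \<Rightarrow> (real \<Rightarrow> 'x \<Rightarrow> 'x \<Rightarrow> 'x \<Rightarrow> 'w) \<Rightarrow> (real \<Rightarrow> 'x \<Rightarrow> 'x \<Rightarrow> 'x \<Rightarrow> 'w)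
    \<Rightarrow> (real \<Rightarrow> real) \<Rightarrow> (real \<Rightarrow> real) \<Rightarrow> real \<Rightarrow> real \<Rightarrow> real \<Rightarrow> real \<Rightarrow> bool" where
  "hyp_g T g gt gu gxi a b \<gamma> \<omega> Cxi Cu \<longleftrightarrow>
     continuous_on ({0..T} \<times> UNIV \<times> UNIV) (\<lambda>(t, u, xi). g t u xi) \<and>
     (\<forall>t\<in>{0..T}. \<forall>u xi. ((\<lambda>s. g s u xi) has_vector_derivative gt t u xi) (at t within {0..T})) \<and>
     (\<forall>t\<in>{0..T}. \<forall>u xi. ((\<lambda>v. g t v xi) has_derivative gu t u xi) (at u)) \<and>
     (\<forall>t\<in>{0..T}. \<forall>u xi. ((\<lambda>eta. g t u eta) has_derivative gxi t u xi) (at xi)) \<and>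
     a absolutely_integrable_on {0..T} \<and> b absolutely_integrable_on {0..T} \<and>
     \<gamma> > 0 \<and> \<omega> > 0 \<and> Cxi > 0 \<and> Cu > 0 \<and>
     (\<forall>u v xi eta. ae_on {0..T} (\<lambda>t.
        onorm (gxi t u xi) \<le> \<gamma> \<and>
        onorm (gu t u xi) \<le> \<omega> \<and>
        norm (gt t u xi) \<le> a t \<and>
        onorm (\<lambda>h. gxi t u xi h - gxi t v eta h) \<le> Cxi * (norm (u - v) + norm (xi - eta)) \<and>
        onorm (\<lambda>h. gu t u xi h - gu t v eta h) \<le> Cu * (norm (u - v) + norm (xi - eta)) \<and>
        norm (gt t u xi - gt t v eta) \<le> b t * (norm (u - v) + norm (xi - eta))))"

end

theory Submission
  imports Defs
begin

text \<open>
  A solution \<open>\<xi>\<^sub>i\<close> of the state-dependent problem lies in \<open>\<Omega>\<close> and solves the sweeping process with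
  \<open>w\<^sub>i = g(t, u\<^sub>i, \<xi>\<^sub>i)\<close>, so the assumed differential inequality holds with \<open>\<eta>\<^sub>i = \<xi>\<^sub>i\<close>; the term
  \<open>\<delta> |\<xi>\<^sub>1' - \<xi>\<^sub>2'|\<close> is then absorbed on the left, as \<open>\<delta> < 1\<close>.
  The gap \<open>|G(x\<^sub>1, w\<^sub>1) - G(x\<^sub>2, w\<^sub>2)|\<close> is absolutely continuous (G and g are Lipschitz, g only
  for almost every time with respect to its derivatives, which a Fubini argument upgrades to every time),
  so its a.e. derivative integrates back to its increment.
  On an interval \<open>[s, t]\<close> this bounds \<open>E(t) - E(s)\<close>, where \<open>E(t) = \<integral>\<^sub>0\<^sup>t |\<xi>\<^sub>1' - \<xi>\<^sub>2'|\<close>, by the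
  distance \<open>\<Delta>\<close> of the data, the value of the gap at \<open>s\<close>, and \<open>(\<Delta> + E(t)) \<integral>\<^sub>s\<^sup>t \<beta>\<close> with
  \<open>\<beta> = 3 m\<^sub>0 (|a| + |b| + |u\<^sub>1'|)\<close>. Where \<open>\<integral>\<^sub>s\<^sup>t \<beta>\<close> is small the last term is absorbed, giving
  \<open>E(t) \<le> A \<Delta> + B E(s)\<close>; since \<open>\<integral>\<^sub>0\<^sup>T \<beta>\<close> is bounded in terms of \<open>R\<close>, finitely many such steps
  cover \<open>[0, T]\<close>.
\<close>

section \<open>Almost-everywhere statements on intervals\<close>

lemma ae_on_mono:
  assumes "ae_on S P" and "\<And>t. t \<in> S \<Longrightarrow> P t \<Longrightarrow> Q t"
  shows "ae_on S Q"
  using assms unfolding ae_on_def by blast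

lemma ae_on_iff_AE: "ae_on S P \<longleftrightarrow> (AE t in lborel. t \<in> S \<longrightarrow> P t)"
proof -
  have "ae_on S P \<longleftrightarrow> (AE t in lebesgue. t \<in> S \<longrightarrow> P t)"
    unfolding ae_on_def eventually_ae_filter negligible_iff_null_sets
  proof safe
    fix N assume "N \<in> null_sets lebesgue" "\<forall>t\<in>S - N. P t"
    then show "\<exists>N\<in>null_sets lebesgue. {x \<in> space lebesgue. \<not> (x \<in> S \<longrightarrow> P x)} \<subseteq> N"
      by (intro bexI[of _ N]) auto
  next
    fix N assume "N \<in> null_sets lebesgue" "{x \<in> space lebesgue. \<not> (x \<in> S \<longrightarrow> P x)} \<subseteq> N"
    then show "\<exists>N. N \<in> null_sets lebesgue \<and> (\<forall>t\<in>S - N. P t)"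
      by (intro exI[of _ N]) auto
  qed
  also have "\<dots> \<longleftrightarrow> (AE t in lborel. t \<in> S \<longrightarrow> P t)"
    by (rule AE_completion_iff)
  finally show ?thesis .
qed

lemma ae_on_interval_dense:
  fixes a b :: real
  assumes "a < b" and "ae_on {a..b} P" and "t \<in> {a..b}" and "r > 0"
  obtains t' where "t' \<in> {a..b}" "P t'" "dist t' t < r"
proof -
  obtain N where N: "negligible N" "\<forall>t\<in>{a..b} - N. P t"
    using assms(2) unfolding ae_on_def by blast
  define l where "l = max a (t - r / 2)"
  define u where "u = min b (t + r / 2)"
  have "l < u" using assms by (auto simp: l_def u_def)
  then have "\<not> negligible {l..u}"
    using negligible_interval(1)[of l u] by simp
  then obtain t' where t': "t' \<in> {l..u}" "t' \<notin> N"
    using negligible_subset[OF N(1)] by blast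
  show thesis
    by (rule that[of t']) (use t' N(2) assms in \<open>auto simp: l_def u_def dist_real_def\<close>)
qed

lemma continuous_on_ae_le_imp_le:
  fixes f :: "real \<Rightarrow> real"
  assumes "a < b" and cont: "continuous_on {a..b} f" and ae: "ae_on {a..b} (\<lambda>t. f t \<le> B)"
    and t: "t \<in> {a..b}"
  shows "f t \<le> B"
proof (rule ccontr)
  assume "\<not> f t \<le> B"
  then obtain r where "r > 0" and r: "\<And>t'. t' \<in> {a..b} \<Longrightarrow> dist t' t < r \<Longrightarrow> dist (f t') (f t) < f t - B"
    using cont t unfolding continuous_on_iff by (metis diff_gt_0_iff_gt not_le)
  obtain t' where "t' \<in> {a..b}" "f t' \<le> B" "dist t' t < r"
    using ae_on_interval_dense[OF \<open>a < b\<close> ae t \<open>r > 0\<close>] by blast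
  with r show False by (force simp: dist_real_def)
qed

lemma ae_on_commute:
  fixes P :: "real \<Rightarrow> real \<Rightarrow> bool"
  assumes P: "{z. P (fst z) (snd z)} \<in> sets borel" and S: "S \<in> sets borel" and T: "T \<in> sets borel"
    and ae: "\<And>s. s \<in> S \<Longrightarrow> ae_on T (P s)"
  shows "ae_on T (\<lambda>t. ae_on S (\<lambda>s. P s t))"
proof -
  let ?Q = "\<lambda>s t. s \<in> S \<longrightarrow> t \<in> T \<longrightarrow> P s t"
  have "{z. ?Q (fst z) (snd z)} = - (S \<times> T) \<union> {z. P (fst z) (snd z)}" by auto
  then have meas: "{z \<in> space (lborel \<Otimes>\<^sub>M lborel). ?Q (fst z) (snd z)} \<in> sets (lborel \<Otimes>\<^sub>M (lborel :: real measure))"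
    using P S T unfolding lborel_prod by (auto intro!: sets.Un borel_comp borel_Times)
  have "AE s in lborel. AE t in lborel. ?Q s t"
  proof (rule AE_I2)
    fix s show "AE t in lborel. ?Q s t"
      using ae[of s] by (cases "s \<in> S") (simp_all add: ae_on_iff_AE)
  qed
  moreover have "pair_sigma_finite lborel (lborel :: real measure)"
    by (simp add: pair_sigma_finite_def lborel.sigma_finite_measure_axioms)
  ultimately have "AE t in lborel. AE s in lborel. ?Q s t"
    using pair_sigma_finite.AE_commute[OF _ meas] by blast
  then show ?thesis
    unfolding ae_on_iff_AE by eventually_elim auto
qed

section \<open>Integrating almost-everywhere derivatives\<close>

lemma straddle_real_derivative:
  fixes \<phi> :: "real \<Rightarrow> real"
  assumes "(\<phi> has_real_derivative D) (at x within S)" and "\<epsilon> > 0"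
  obtains d where "d > 0"
    and "\<And>u v. u \<in> S \<Longrightarrow> v \<in> S \<Longrightarrow> u \<le> x \<Longrightarrow> x \<le> v \<Longrightarrow> x - u < d \<Longrightarrow> v - x < d \<Longrightarrow>
           \<bar>\<phi> v - \<phi> u - (v - u) * D\<bar> \<le> \<epsilon> * (v - u)"
proof -
  have "(\<phi> has_derivative (\<lambda>y. y * D)) (at x within S)"
    using assms(1) by (simp add: has_real_derivative_iff_has_vector_derivative has_vector_derivative_def)
  then obtain d where "d > 0"
    and d: "\<And>y. y \<in> S \<Longrightarrow> \<bar>y - x\<bar> < d \<Longrightarrow> \<bar>\<phi> y - \<phi> x - (y - x) * D\<bar> \<le> \<epsilon> * \<bar>y - x\<bar>"
    using assms(2) unfolding has_derivative_within_alt by fastforce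
  show thesis
  proof (rule that[OF \<open>d > 0\<close>])
    fix u v assume "u \<in> S" "v \<in> S" "u \<le> x" "x \<le> v" "x - u < d" "v - x < d"
    then have "\<bar>\<phi> u - \<phi> x - (u - x) * D\<bar> \<le> \<epsilon> * (x - u)" "\<bar>\<phi> v - \<phi> x - (v - x) * D\<bar> \<le> \<epsilon> * (v - x)"
      using d[of u] d[of v] by auto
    then show "\<bar>\<phi> v - \<phi> u - (v - u) * D\<bar> \<le> \<epsilon> * (v - u)"
      by (simp add: algebra_simps abs_le_iff)
  qed
qed

lemma straddle_real_derivative_gauge:
  fixes \<phi> f :: "real \<Rightarrow> real"
  assumes der: "\<And>x. x \<in> A \<Longrightarrow> (\<phi> has_real_derivative f x) (at x within S)" and "\<epsilon> > 0"
  obtains d where "\<And>x. d x > 0"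
    and "\<And>x u v. x \<in> A \<Longrightarrow> u \<in> S \<Longrightarrow> v \<in> S \<Longrightarrow> u \<le> x \<Longrightarrow> x \<le> v \<Longrightarrow> x - u < d x \<Longrightarrow> v - x < d x \<Longrightarrow>
           \<bar>\<phi> v - \<phi> u - (v - u) * f x\<bar> \<le> \<epsilon> * (v - u)"
proof -
  define P where "P x r \<longleftrightarrow> r > 0 \<and> (x \<in> A \<longrightarrow> (\<forall>u v. u \<in> S \<longrightarrow> v \<in> S \<longrightarrow> u \<le> x \<longrightarrow> x \<le> v \<longrightarrow>
      x - u < r \<longrightarrow> v - x < r \<longrightarrow> \<bar>\<phi> v - \<phi> u - (v - u) * f x\<bar> \<le> \<epsilon> * (v - u)))" for x r
  have "\<exists>r. P x r" for x
  proof (cases "x \<in> A")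
    case True
    obtain r where "r > 0" and "\<And>u v. u \<in> S \<Longrightarrow> v \<in> S \<Longrightarrow> u \<le> x \<Longrightarrow> x \<le> v \<Longrightarrow> x - u < r \<Longrightarrow> v - x < r \<Longrightarrow>
        \<bar>\<phi> v - \<phi> u - (v - u) * f x\<bar> \<le> \<epsilon> * (v - u)"
      using straddle_real_derivative[OF der[OF True] \<open>\<epsilon> > 0\<close>] by blast
    then show ?thesis unfolding P_def by blast
  next
    case False
    then show ?thesis unfolding P_def by (intro exI[of _ 1]) simp
  qed
  then obtain d where d: "\<And>x. P x (d x)" by metis
  show thesis
  proof (rule that)
    show "d x > 0" for x using d[of x] unfolding P_def by simp
  qed (use d in \<open>unfold P_def, blast\<close>)
qed

lemma Henstock_negligible_tags:
  fixes h :: "real \<Rightarrow> real"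
  assumes h: "h integrable_on {s..t}" and N: "negligible N" and "\<epsilon> > 0"
  obtains \<gamma> where "gauge \<gamma>"
    and "\<And>p. p tagged_partial_division_of {s..t} \<Longrightarrow> \<gamma> fine p \<Longrightarrow> (\<And>x K. (x, K) \<in> p \<Longrightarrow> x \<in> N) \<Longrightarrow>
           (\<Sum>(x, K)\<in>p. integral K h) < \<epsilon>"
proof -
  define g where "g = (\<lambda>x. if x \<in> N then \<bar>h x\<bar> else 0)"
  have g0: "(g has_integral 0) K" for K
    by (rule has_integral_spike[OF N _ has_integral_0]) (auto simp: g_def)
  have "\<epsilon> / 2 > 0" using \<open>\<epsilon> > 0\<close> by simp
  have "h integrable_on cbox s t" "g integrable_on cbox s t" using h g0 by auto
  obtain \<gamma>1 where "gauge \<gamma>1" and \<gamma>1: "\<And>p. p tagged_partial_division_of cbox s t \<Longrightarrow> \<gamma>1 fine p \<Longrightarrow>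
      (\<Sum>(x, K)\<in>p. norm (Henstock_Kurzweil_Integration.content K *\<^sub>R h x - integral K h)) < \<epsilon> / 2"
    by (rule Henstock_lemma[OF \<open>h integrable_on cbox s t\<close> \<open>\<epsilon> / 2 > 0\<close>]) blast
  obtain \<gamma>2 where "gauge \<gamma>2" and \<gamma>2: "\<And>p. p tagged_partial_division_of cbox s t \<Longrightarrow> \<gamma>2 fine p \<Longrightarrow>
      (\<Sum>(x, K)\<in>p. norm (Henstock_Kurzweil_Integration.content K *\<^sub>R g x - integral K g)) < \<epsilon> / 2"
    by (rule Henstock_lemma[OF \<open>g integrable_on cbox s t\<close> \<open>\<epsilon> / 2 > 0\<close>]) blast
  show thesis
  proof (rule that[of "\<lambda>x. \<gamma>1 x \<inter> \<gamma>2 x"])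
    show "gauge (\<lambda>x. \<gamma>1 x \<inter> \<gamma>2 x)" using \<open>gauge \<gamma>1\<close> \<open>gauge \<gamma>2\<close> by (rule gauge_Int)
  next
    fix p assume p: "p tagged_partial_division_of {s..t}" and fine: "(\<lambda>x. \<gamma>1 x \<inter> \<gamma>2 x) fine p"
      and tags: "\<And>x K. (x, K) \<in> p \<Longrightarrow> x \<in> N"
    have "integral K h \<le> norm (Henstock_Kurzweil_Integration.content K *\<^sub>R h x - integral K h) + norm (Henstock_Kurzweil_Integration.content K *\<^sub>R g x - integral K g)"
      if "(x, K) \<in> p" for x K
    proof -
      have "integral K g = 0" using g0 by (rule integral_unique)
      moreover have "Henstock_Kurzweil_Integration.content K * h x \<le> Henstock_Kurzweil_Integration.content K * \<bar>h x\<bar>"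
        by (intro mult_left_mono) auto
      ultimately show ?thesis
        using tags[OF that] by (simp add: g_def abs_mult)
    qed
    then have "(\<Sum>(x, K)\<in>p. integral K h) \<le>
        (\<Sum>(x, K)\<in>p. norm (Henstock_Kurzweil_Integration.content K *\<^sub>R h x - integral K h)) + (\<Sum>(x, K)\<in>p. norm (Henstock_Kurzweil_Integration.content K *\<^sub>R g x - integral K g))"
      by (auto simp: sum.distrib[symmetric] split_def intro!: sum_mono)
    also have "\<dots> < \<epsilon> / 2 + \<epsilon> / 2"
      using \<gamma>1 \<gamma>2 p fine by (intro add_strict_mono) (auto simp: fine_Int)
    finally show "(\<Sum>(x, K)\<in>p. integral K h) < \<epsilon>" by simp
  qed
qed

text \<open>Tags outside \<open>N\<close> are handled by the straddle lemma; the cells tagged in \<open>N\<close> contribute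
  at most the integral of \<open>h\<close> over them, which is small by \<open>Henstock_negligible_tags\<close>.\<close>

lemma has_integral_ae_derivative:
  fixes \<phi> f h :: "real \<Rightarrow> real"
  assumes "s \<le> t" and h: "h integrable_on {s..t}" and N: "negligible N"
    and der: "\<And>x. x \<in> {s..t} - N \<Longrightarrow> (\<phi> has_real_derivative f x) (at x within {s..t})"
    and ctrl: "\<And>u v. s \<le> u \<Longrightarrow> u \<le> v \<Longrightarrow> v \<le> t \<Longrightarrow> \<bar>\<phi> v - \<phi> u\<bar> \<le> integral {u..v} h"
  shows "(f has_integral (\<phi> t - \<phi> s)) {s..t}"
proof -
  define f0 where "f0 x = (if x \<in> N then 0 else f x)" for x
  have "(f0 has_integral (\<phi> t - \<phi> s)) {s..t}"
    unfolding has_integral_real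
  proof (intro allI impI)
    fix e :: real assume "e > 0"
    define \<epsilon> where "\<epsilon> = e / 2 / (t - s + 1)"
    have "\<epsilon> > 0" using \<open>e > 0\<close> \<open>s \<le> t\<close> by (simp add: \<epsilon>_def)
    obtain \<gamma> where "gauge \<gamma>" and \<gamma>: "\<And>p. p tagged_partial_division_of {s..t} \<Longrightarrow> \<gamma> fine p \<Longrightarrow>
        (\<And>x K. (x, K) \<in> p \<Longrightarrow> x \<in> N) \<Longrightarrow> (\<Sum>(x, K)\<in>p. integral K h) < \<epsilon>"
      by (rule Henstock_negligible_tags[OF h N \<open>\<epsilon> > 0\<close>]) blast
    obtain d where d: "\<And>x. d x > 0"
      and straddle: "\<And>x u v. x \<in> {s..t} - N \<Longrightarrow> u \<in> {s..t} \<Longrightarrow> v \<in> {s..t} \<Longrightarrow> u \<le> x \<Longrightarrow> x \<le> v \<Longrightarrow>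
          x - u < d x \<Longrightarrow> v - x < d x \<Longrightarrow> \<bar>\<phi> v - \<phi> u - (v - u) * f x\<bar> \<le> \<epsilon> * (v - u)"
      using straddle_real_derivative_gauge[OF der \<open>\<epsilon> > 0\<close>] by blast
    show "\<exists>\<gamma>. gauge \<gamma> \<and> (\<forall>p. p tagged_division_of {s..t} \<and> \<gamma> fine p \<longrightarrow>
        norm ((\<Sum>(x, K)\<in>p. Henstock_Kurzweil_Integration.content K *\<^sub>R f0 x) - (\<phi> t - \<phi> s)) < e)"
    proof (intro exI conjI allI impI; (elim conjE)?)
      show "gauge (\<lambda>x. ball x (d x) \<inter> \<gamma> x)"
        using d \<open>gauge \<gamma>\<close> by (intro gauge_Int gauge_ball_dependent) auto
    next
      fix p assume p: "p tagged_division_of {s..t}" and fine: "(\<lambda>x. ball x (d x) \<inter> \<gamma> x) fine p"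
      have "finite p" using p by blast
      have cell: "\<exists>u v. K = {u..v} \<and> u \<le> v \<and> x \<in> K \<and> K \<subseteq> {s..t} \<and> K \<subseteq> ball x (d x) \<and> K \<subseteq> \<gamma> x"
        if "(x, K) \<in> p" for x K
        using tagged_division_ofD(2-4)[OF p that] fineD[OF fine that] by fastforce
      define F where "F = (\<lambda>(x, K). Henstock_Kurzweil_Integration.content K * f0 x - (\<phi> (Sup K) - \<phi> (Inf K)))"
      define B where "B = {(x, K :: real set). x \<notin> N}"
      have "(\<Sum>(x, K)\<in>p. Henstock_Kurzweil_Integration.content K *\<^sub>R f0 x) - (\<phi> t - \<phi> s) = sum F p"
        using additive_tagged_division_1[OF \<open>s \<le> t\<close> p, of \<phi>]
        by (simp add: F_def split_def sum_subtractf)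
      also have "\<dots> = sum F (p \<inter> B) + sum F (p - B)"
        using \<open>finite p\<close> by (rule sum.Int_Diff)
      finally have split: "(\<Sum>(x, K)\<in>p. Henstock_Kurzweil_Integration.content K *\<^sub>R f0 x) - (\<phi> t - \<phi> s)
          = sum F (p \<inter> B) + sum F (p - B)" .
      have "\<bar>sum F (p \<inter> B)\<bar> \<le> (\<Sum>(x, K)\<in>p \<inter> B. \<epsilon> * Henstock_Kurzweil_Integration.content K)"
      proof (rule order_trans[OF sum_abs sum_mono], clarify)
        fix x K assume xK: "(x, K) \<in> p" and "(x, K) \<in> B"
        then have "x \<notin> N" by (simp add: B_def)
        obtain u v where K: "K = {u..v}" "u \<le> v" "x \<in> K" "K \<subseteq> {s..t}" "K \<subseteq> ball x (d x)"
          using cell[OF xK] by blast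
        have "u \<in> K" "v \<in> K" using K(1,2) by auto
        then have "u \<in> ball x (d x)" "v \<in> ball x (d x)" using K(5) by blast+
        then have "x - u < d x" "v - x < d x" by (auto simp: dist_real_def)
        then have "\<bar>\<phi> v - \<phi> u - (v - u) * f x\<bar> \<le> \<epsilon> * (v - u)"
          using K \<open>x \<notin> N\<close> by (intro straddle) auto
        then show "\<bar>F (x, K)\<bar> \<le> \<epsilon> * Henstock_Kurzweil_Integration.content K"
          using K \<open>x \<notin> N\<close> by (simp add: F_def f0_def abs_minus_commute mult.commute)
      qed
      also have "\<dots> \<le> (\<Sum>(x, K)\<in>p. \<epsilon> * Henstock_Kurzweil_Integration.content K)"
        using \<open>finite p\<close> \<open>\<epsilon> > 0\<close> by (intro sum_mono2) auto
      also have "\<dots> = \<epsilon> * (t - s)"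
        using additive_content_tagged_division[of p s t] p \<open>s \<le> t\<close>
        by (simp add: sum_distrib_left[symmetric] split_def)
      finally have small_regular: "\<bar>sum F (p \<inter> B)\<bar> \<le> \<epsilon> * (t - s)" .
      have "\<bar>sum F (p - B)\<bar> \<le> (\<Sum>(x, K)\<in>p - B. integral K h)"
      proof (rule order_trans[OF sum_abs sum_mono], clarify)
        fix x K assume xK: "(x, K) \<in> p" and "(x, K) \<notin> B"
        then have "x \<in> N" by (simp add: B_def)
        obtain u v where K: "K = {u..v}" "u \<le> v" "K \<subseteq> {s..t}" using cell[OF xK] by blast
        show "\<bar>F (x, K)\<bar> \<le> integral K h"
          using ctrl[of u v] K \<open>x \<in> N\<close> by (simp add: F_def f0_def abs_minus_commute)
      qed
      also have "\<dots> < \<epsilon>"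
      proof (rule \<gamma>)
        show "p - B tagged_partial_division_of {s..t}"
          using p tagged_partial_division_subset[of p] unfolding tagged_division_of_def by blast
        show "\<gamma> fine (p - B)" using fine by (auto simp: fine_def)
      qed (auto simp: B_def)
      finally have small_singular: "\<bar>sum F (p - B)\<bar> < \<epsilon>" .
      have "\<epsilon> * (t - s) + \<epsilon> = \<epsilon> * (t - s + 1)" by (simp add: algebra_simps)
      also have "\<dots> = e / 2"
        using \<open>s \<le> t\<close> unfolding \<epsilon>_def by (metis add_nonneg_pos diff_ge_0_iff_ge less_irrefl nonzero_eq_divide_eq zero_less_one)
      finally have "\<epsilon> * (t - s) + \<epsilon> = e / 2" .
      then show "norm ((\<Sum>(x, K)\<in>p. Henstock_Kurzweil_Integration.content K *\<^sub>R f0 x) - (\<phi> t - \<phi> s)) < e"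
        unfolding split using small_regular small_singular \<open>e > 0\<close> by simp
    qed
  qed
  then show ?thesis
    by (rule has_integral_spike[OF N, rotated]) (simp add: f0_def)
qed

lemma integral_add_increment_le:
  fixes \<phi> f g h :: "real \<Rightarrow> real"
  assumes "s \<le> t" and f: "f integrable_on {s..t}" and g: "g integrable_on {s..t}"
    and h: "h integrable_on {s..t}"
    and ctrl: "\<And>u v. s \<le> u \<Longrightarrow> u \<le> v \<Longrightarrow> v \<le> t \<Longrightarrow> \<bar>\<phi> v - \<phi> u\<bar> \<le> integral {u..v} h"
    and ineq: "ae_on {s..t} (\<lambda>r. \<exists>D. (\<phi> has_real_derivative D) (at r) \<and> f r + D \<le> g r)"
  shows "integral {s..t} f + (\<phi> t - \<phi> s) \<le> integral {s..t} g"
proof -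
  obtain N where N: "negligible N"
    and good: "\<And>r. r \<in> {s..t} - N \<Longrightarrow> \<exists>D. (\<phi> has_real_derivative D) (at r) \<and> f r + D \<le> g r"
    using ineq unfolding ae_on_def by blast
  define D where "D r = (if r \<in> {s..t} - N then SOME D. (\<phi> has_real_derivative D) (at r) \<and> f r + D \<le> g r
    else g r - f r)" for r
  have D: "(\<phi> has_real_derivative D r) (at r) \<and> f r + D r \<le> g r" if "r \<in> {s..t} - N" for r
    using someI_ex[OF good[OF that]] that by (simp add: D_def)
  have "(D has_integral (\<phi> t - \<phi> s)) {s..t}"
  proof (rule has_integral_ae_derivative[OF \<open>s \<le> t\<close> h N _ ctrl])
    show "(\<phi> has_real_derivative D r) (at r within {s..t})" if "r \<in> {s..t} - N" for r
      using has_field_derivative_at_within[OF conjunct1[OF D[OF that]]] .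
  qed
  then have "((\<lambda>r. f r + D r) has_integral (integral {s..t} f + (\<phi> t - \<phi> s))) {s..t}"
    using f by (intro has_integral_add integrable_integral)
  moreover have "f r + D r \<le> g r" if "r \<in> {s..t}" for r
    using D[of r] that by (cases "r \<in> N") (auto simp: D_def)
  ultimately show ?thesis
    using has_integral_le[OF _ integrable_integral[OF g]] by blast
qed

lemma norm_diff_le_integral_ae_bound:
  fixes k :: "real \<Rightarrow> 'b::banach"
  assumes "u \<le> v"
    and der: "\<And>t. t \<in> {u..v} \<Longrightarrow> (k has_vector_derivative k' t) (at t within {u..v})"
    and B: "B integrable_on {u..v}" and bound: "ae_on {u..v} (\<lambda>t. norm (k' t) \<le> B t)"
  shows "norm (k v - k u) \<le> integral {u..v} B"
proof -
  obtain N where N: "negligible N" and NB: "\<And>t. t \<in> {u..v} - N \<Longrightarrow> norm (k' t) \<le> B t"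
    using bound unfolding ae_on_def by blast
  define k0 where "k0 t = (if t \<in> N then 0 else k' t)" for t
  define B0 where "B0 t = (if t \<in> N then 0 else B t)" for t
  have "(k0 has_integral (k v - k u)) {u..v}"
    unfolding k0_def
    by (rule has_integral_spike[OF N _ fundamental_theorem_of_calculus[OF \<open>u \<le> v\<close> der]]) auto
  moreover have "(B0 has_integral integral {u..v} B) {u..v}"
    unfolding B0_def by (rule has_integral_spike[OF N _ integrable_integral[OF B]]) auto
  moreover have "norm (k0 t) \<le> B0 t" if "t \<in> {u..v}" for t
    using NB[of t] that by (simp add: k0_def B0_def)
  ultimately show ?thesis
    using integral_norm_bound_integral[of k0 "{u..v}" B0] by (auto simp: integral_unique)
qed

section \<open>Measurability of derivatives and Lipschitz bounds\<close>

lemma clamp_real_in: "(a::real) \<le> b \<Longrightarrow> clamp a b t \<in> {a..b}"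
  using clamp_in_interval[of a b t] by simp

lemma clamp_real_cancel: "(t::real) \<in> {a..b} \<Longrightarrow> clamp a b t = t"
  using clamp_cancel_cbox[of t a b] by simp

lemma continuous_on_clamp_real: "(a::real) \<le> b \<Longrightarrow> continuous_on S (clamp a b)"
  using clamp_continuous_on[of a b "\<lambda>t. t" S] by simp

lemma LIMSEQ_difference_quotient:
  fixes k :: "real \<Rightarrow> 'b::real_normed_vector"
  assumes "(k has_vector_derivative D) (at s)"
  shows "(\<lambda>n. real (Suc n) *\<^sub>R (k (s + 1 / real (Suc n)) - k s)) \<longlonglongrightarrow> D"
proof -
  define h where "h n = 1 / real (Suc n)" for n
  have "h n > 0" for n by (simp add: h_def)
  have "h \<longlonglongrightarrow> 0"
    unfolding h_def by (rule LIMSEQ_Suc[OF lim_const_over_n])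
  then have "filterlim h (at 0) sequentially"
    unfolding filterlim_at using \<open>\<And>n. h n > 0\<close> by (auto intro: always_eventually simp: less_imp_neq[symmetric])
  moreover have "(\<lambda>u. norm (k (s + u) - k s - u *\<^sub>R D) / norm u) \<midarrow>0\<rightarrow> 0"
    using assms unfolding has_vector_derivative_def has_derivative_at by blast
  ultimately have lim: "(\<lambda>n. norm (k (s + h n) - k s - h n *\<^sub>R D) / norm (h n)) \<longlonglongrightarrow> 0"
    by (rule filterlim_compose[rotated])
  have "norm (real (Suc n) *\<^sub>R (k (s + 1 / real (Suc n)) - k s) - D)
      = norm (k (s + h n) - k s - h n *\<^sub>R D) / norm (h n)" for n
  proof -
    have "real (Suc n) *\<^sub>R (k (s + 1 / real (Suc n)) - k s) - D = (1 / h n) *\<^sub>R (k (s + h n) - k s - h n *\<^sub>R D)"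
      using \<open>h n > 0\<close> by (simp add: h_def algebra_simps)
    then show ?thesis using \<open>h n > 0\<close> by (simp add: divide_simps)
  qed
  with lim have "(\<lambda>n. norm (real (Suc n) *\<^sub>R (k (s + 1 / real (Suc n)) - k s) - D)) \<longlonglongrightarrow> 0"
    by presburger
  then show ?thesis
    by (simp add: LIM_zero_cancel tendsto_norm_zero_iff)
qed

lemma measurable_on_norm_vector_derivative:
  fixes h :: "real \<Rightarrow> 'b::real_normed_vector"
  assumes "a \<le> b" and cont: "continuous_on {a..b} h" and N: "negligible N"
    and der: "\<And>t. t \<in> {a..b} - N \<Longrightarrow> (h has_vector_derivative h' t) (at t)"
  shows "(\<lambda>t. norm (h' t)) measurable_on {a..b}"
proof (rule measurable_on_limit)
  define H where "H t = h (clamp a b t)" for t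
  define q where "q n t = norm (real (Suc n) *\<^sub>R (H (t + 1 / real (Suc n)) - H t))" for n t
  have "continuous_on UNIV H"
    unfolding H_def using cont by (intro clamp_continuous_on) simp
  then have "continuous_on {a..b} (q n)" for n
    unfolding q_def by (intro continuous_intros continuous_on_compose2[OF \<open>continuous_on UNIV H\<close>]) auto
  then show "q n measurable_on {a..b}" for n
    by (simp add: measurable_on_iff_borel_measurable continuous_imp_measurable_on_sets_lebesgue)
  show "negligible (N \<union> {a, b})" using N by simp
  show "(\<lambda>n. q n t) \<longlonglongrightarrow> norm (h' t)" if t: "t \<in> {a..b} - (N \<union> {a, b})" for t
  proof -
    have "t \<in> {a<..<b}" "t \<in> {a..b} - N" using t by auto
    then have "(H has_vector_derivative h' t) (at t)"
      unfolding H_def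
      by (intro has_vector_derivative_transform_within_open[OF der open_greaterThanLessThan])
        (auto simp: clamp_real_cancel)
    from tendsto_norm[OF LIMSEQ_difference_quotient[OF this]] show ?thesis
      by (simp add: q_def)
  qed
qed

lemma borel_measurable_partial_vector_derivative:
  fixes H :: "real \<Rightarrow> real \<Rightarrow> 'b::real_normed_vector"
  assumes cont: "continuous_on UNIV (\<lambda>z. H (fst z) (snd z))"
    and der: "\<And>x y. ((\<lambda>s. H s y) has_vector_derivative D (x, y)) (at x)"
  shows "D \<in> borel_measurable borel"
proof (rule borel_measurable_LIMSEQ_metric)
  have "continuous_on UNIV ((\<lambda>z. H (fst z) (snd z)) \<circ> (\<lambda>z. (fst z + r, snd z)))" for r
    by (intro continuous_on_compose continuous_intros continuous_on_subset[OF cont]) auto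
  then have shift: "continuous_on UNIV (\<lambda>z. H (fst z + r) (snd z))" for r
    by (simp add: o_def)
  show "(\<lambda>z. real (Suc n) *\<^sub>R (H (fst z + 1 / real (Suc n)) (snd z) - H (fst z) (snd z))) \<in> borel_measurable borel" for n
    by (intro borel_measurable_continuous_onI continuous_intros shift cont)
  show "(\<lambda>n. real (Suc n) *\<^sub>R (H (fst z + 1 / real (Suc n)) (snd z) - H (fst z) (snd z))) \<longlonglongrightarrow> D z" for z
    using LIMSEQ_difference_quotient[OF der[where x = "fst z" and y = "snd z"]] by simp
qed

text \<open>The derivative bound holds, for each point, only for almost every \<open>t\<close>. By Fubini, for almost
  every \<open>t\<close> it holds at almost every point of the segment from \<open>x\<close> to \<open>y\<close>, which is enough for the
  mean value inequality; continuity in \<open>t\<close> removes the remaining exceptional set.\<close>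

lemma differentiable_bound_ae:
  fixes f :: "real \<Rightarrow> 'a::real_normed_vector \<Rightarrow> 'b::banach"
  assumes "a < b" and cont: "continuous_on ({a..b} \<times> UNIV) (\<lambda>(t, x). f t x)"
    and der: "\<And>t x. t \<in> {a..b} \<Longrightarrow> (f t has_derivative f' t x) (at x)"
    and bound: "\<And>x. ae_on {a..b} (\<lambda>t. onorm (f' t x) \<le> M)"
    and t: "t \<in> {a..b}"
  shows "norm (f t y - f t x) \<le> M * norm (y - x)"
proof -
  define d where "d = y - x"
  define c where "c = M * norm d"
  have segment: "((\<lambda>s. f \<tau> (x + s *\<^sub>R d)) has_vector_derivative f' \<tau> (x + s *\<^sub>R d) d) (at s)"
    if "\<tau> \<in> {a..b}" for \<tau> s
  proof -
    have "((\<lambda>s. x + s *\<^sub>R d) has_derivative (\<lambda>r. r *\<^sub>R d)) (at s)"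
      by (auto intro!: derivative_eq_intros)
    from diff_chain_at[OF this der[OF that]]
    have "((\<lambda>s. f \<tau> (x + s *\<^sub>R d)) has_derivative (\<lambda>r. f' \<tau> (x + s *\<^sub>R d) (r *\<^sub>R d))) (at s)"
      by (simp add: o_def)
    moreover have "bounded_linear (f' \<tau> (x + s *\<^sub>R d))"
      using der[OF that] by (rule has_derivative_bounded_linear)
    ultimately show ?thesis
      unfolding has_vector_derivative_def by (simp add: linear_simps)
  qed
  have segment_bound: "norm (f' \<tau> (x + s *\<^sub>R d) d) \<le> c"
    if "\<tau> \<in> {a..b}" "onorm (f' \<tau> (x + s *\<^sub>R d)) \<le> M" for \<tau> s
  proof -
    have "norm (f' \<tau> (x + s *\<^sub>R d) d) \<le> onorm (f' \<tau> (x + s *\<^sub>R d)) * norm d"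
      using der[OF that(1)] by (intro onorm has_derivative_bounded_linear)
    also have "\<dots> \<le> c"
      unfolding c_def using that(2) by (intro mult_right_mono) auto
    finally show ?thesis .
  qed
  define D where "D z = f' (clamp a b (snd z)) (x + fst z *\<^sub>R d) d" for z :: "real \<times> real"
  have "D \<in> borel_measurable borel"
  proof (rule borel_measurable_partial_vector_derivative[where H = "\<lambda>s \<tau>. f (clamp a b \<tau>) (x + s *\<^sub>R d)"])
    have "continuous_on UNIV ((\<lambda>(t, x). f t x) \<circ> (\<lambda>z. (clamp a b (snd z), x + fst z *\<^sub>R d)))"
      using \<open>a < b\<close> clamp_real_in
      by (intro continuous_on_compose continuous_on_subset[OF cont] continuous_intros
          continuous_on_compose2[OF continuous_on_clamp_real[of a b UNIV]]) auto
    then show "continuous_on UNIV (\<lambda>z. f (clamp a b (snd z)) (x + fst z *\<^sub>R d))"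
      by (simp add: o_def)
    show "((\<lambda>s. f (clamp a b \<tau>) (x + s *\<^sub>R d)) has_vector_derivative D (s, \<tau>)) (at s)" for s \<tau>
      unfolding D_def using segment clamp_real_in \<open>a < b\<close> by simp
  qed
  then have "{z. norm (D z) \<le> c} \<in> sets borel"
    using borel_measurable_iff_le[THEN iffD1, OF borel_measurable_norm] by simp
  then have "ae_on {a..b} (\<lambda>\<tau>. ae_on {0..1} (\<lambda>s. norm (D (s, \<tau>)) \<le> c))"
  proof (rule ae_on_commute[where P = "\<lambda>s \<tau>. norm (D (s, \<tau>)) \<le> c", simplified])
    show "ae_on {a..b} (\<lambda>\<tau>. norm (D (s, \<tau>)) \<le> c)" for s
      using bound[of "x + s *\<^sub>R d"]
      by (rule ae_on_mono) (simp add: D_def clamp_real_cancel segment_bound)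
  qed auto
  then have "ae_on {a..b} (\<lambda>\<tau>. norm (f \<tau> y - f \<tau> x) \<le> c)"
  proof (rule ae_on_mono)
    fix \<tau> assume \<tau>: "\<tau> \<in> {a..b}" and "ae_on {0..1} (\<lambda>s. norm (D (s, \<tau>)) \<le> c)"
    then have "ae_on {0..1} (\<lambda>s. norm (f' \<tau> (x + s *\<^sub>R d) d) \<le> c)"
      by (simp add: D_def clamp_real_cancel)
    then have "norm (f \<tau> (x + 1 *\<^sub>R d) - f \<tau> (x + 0 *\<^sub>R d)) \<le> c"
      using norm_diff_le_integral_ae_bound[of 0 1 "\<lambda>s. f \<tau> (x + s *\<^sub>R d)" "\<lambda>s. f' \<tau> (x + s *\<^sub>R d) d" "\<lambda>_. c"]
        segment[OF \<tau>] by (simp add: integrable_const_ivl has_vector_derivative_at_within)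
    then show "norm (f \<tau> y - f \<tau> x) \<le> c"
      by (simp add: d_def)
  qed
  moreover have "continuous_on {a..b} (\<lambda>\<tau>. norm (f \<tau> y - f \<tau> x))"
  proof -
    have "continuous_on {a..b} ((\<lambda>(t, x). f t x) \<circ> (\<lambda>\<tau>. (\<tau>, p)))" for p
      by (intro continuous_on_compose continuous_on_subset[OF cont] continuous_intros) auto
    then show ?thesis by (auto simp: o_def intro!: continuous_intros)
  qed
  ultimately show ?thesis
    using continuous_on_ae_le_imp_le[OF \<open>a < b\<close>] t by (simp add: c_def d_def)
qed

section \<open>Absolutely continuous functions\<close>

lemma W11D:
  assumes "W11 T f f'"
  shows "f' integrable_on {0..T}" and "(\<lambda>t. norm (f' t)) integrable_on {0..T}"
    and "\<And>t. t \<in> {0..T} \<Longrightarrow> f t = f 0 + integral {0..t} f'"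
    and "ae_on {0..T} (\<lambda>t. (f has_vector_derivative f' t) (at t))"
  using assms unfolding W11_def by blast+

lemma W11_integrable_on:
  assumes "W11 T f f'" and "0 \<le> u" and "v \<le> T"
  shows "f' integrable_on {u..v}" and "(\<lambda>t. norm (f' t)) integrable_on {u..v}"
proof -
  have "{u..v} \<subseteq> {0..T}" using assms(2,3) by auto
  then show "f' integrable_on {u..v}" "(\<lambda>t. norm (f' t)) integrable_on {u..v}"
    using integrable_on_subinterval W11D(1,2)[OF assms(1)] by blast+
qed

lemma W11_increment:
  assumes W: "W11 T f f'" and "0 \<le> u" "u \<le> v" "v \<le> T"
  shows "f v - f u = integral {u..v} f'"
proof -
  have "f v = f 0 + integral {0..v} f'" "f u = f 0 + integral {0..u} f'"
    using assms by (simp_all add: W11D(3)[OF W, of v] W11D(3)[OF W, of u])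
  moreover have "integral {0..u} f' + integral {u..v} f' = integral {0..v} f'"
    using assms by (intro Henstock_Kurzweil_Integration.integral_combine W11_integrable_on[OF W]) auto
  ultimately show ?thesis by (simp add: algebra_simps)
qed

lemma W11_norm_increment_le:
  assumes W: "W11 T f f'" and "0 \<le> u" "u \<le> v" "v \<le> T"
  shows "norm (f v - f u) \<le> integral {u..v} (\<lambda>t. norm (f' t))"
  unfolding W11_increment[OF assms]
  using assms by (intro integral_norm_bound_integral W11_integrable_on[OF W]) auto

lemma W11_norm_le:
  assumes W: "W11 T f f'" and t: "t \<in> {0..T}"
  shows "norm (f t) \<le> norm (f 0) + integral {0..T} (\<lambda>t. norm (f' t))"
proof -
  have "norm (f t - f 0) \<le> integral {0..t} (\<lambda>t. norm (f' t))"
    using t by (intro W11_norm_increment_le[OF W]) auto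
  also have "\<dots> \<le> integral {0..T} (\<lambda>t. norm (f' t))"
    using t by (intro integral_subset_le W11_integrable_on[OF W]) auto
  finally show ?thesis
    using norm_triangle_sub[of "f t" "f 0"] by linarith
qed

lemma W11_continuous_on:
  assumes "W11 T f f'"
  shows "continuous_on {0..T} f"
proof -
  have "continuous_on {0..T} (\<lambda>t. f 0 + integral {0..t} f')"
    using W11D(1)[OF assms] by (intro continuous_intros indefinite_integral_continuous_1)
  then show ?thesis
    by (rule continuous_on_eq) (rule W11D(3)[OF assms, symmetric])
qed

lemma W11_diff:
  assumes "0 \<le> T" and f: "W11 T f f'" and g: "W11 T g g'"
  shows "W11 T (\<lambda>t. f t - g t) (\<lambda>t. f' t - g' t)"
proof -
  obtain N1 where "negligible N1" and df: "\<And>t. t \<in> {0..T} - N1 \<Longrightarrow> (f has_vector_derivative f' t) (at t)"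
    using W11D(4)[OF f] unfolding ae_on_def by blast
  obtain N2 where "negligible N2" and dg: "\<And>t. t \<in> {0..T} - N2 \<Longrightarrow> (g has_vector_derivative g' t) (at t)"
    using W11D(4)[OF g] unfolding ae_on_def by blast
  have N: "negligible (N1 \<union> N2)" using \<open>negligible N1\<close> \<open>negligible N2\<close> by simp
  have der: "((\<lambda>t. f t - g t) has_vector_derivative f' t - g' t) (at t)" if "t \<in> {0..T} - (N1 \<union> N2)" for t
    using df[of t] dg[of t] that by (auto intro: has_vector_derivative_diff)
  have "(\<lambda>t. norm (f' t - g' t)) integrable_on {0..T}"
  proof (rule measurable_bounded_by_integrable_imp_integrable)
    have "continuous_on {0..T} (\<lambda>t. f t - g t)"
      using W11_continuous_on[OF f] W11_continuous_on[OF g] by (intro continuous_intros)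
    from measurable_on_norm_vector_derivative[OF \<open>0 \<le> T\<close> this N der]
    show "(\<lambda>t. norm (f' t - g' t)) \<in> borel_measurable (lebesgue_on {0..T})"
      by (simp add: measurable_on_iff_borel_measurable)
    show "(\<lambda>t. norm (f' t) + norm (g' t)) integrable_on {0..T}"
      using W11D(2)[OF f] W11D(2)[OF g] by (rule integrable_add)
  qed (auto simp: norm_triangle_ineq4)
  moreover have "f t - g t = (f 0 - g 0) + integral {0..t} (\<lambda>t. f' t - g' t)" if "t \<in> {0..T}" for t
    using that W11_increment[OF f, of 0 t] W11_increment[OF g, of 0 t]
      integral_diff[OF W11_integrable_on(1)[OF f] W11_integrable_on(1)[OF g], of 0 t]
    by (simp add: algebra_simps)
  moreover have "ae_on {0..T} (\<lambda>t. ((\<lambda>t. f t - g t) has_vector_derivative f' t - g' t) (at t))"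
    unfolding ae_on_def using N der by blast
  moreover have "(\<lambda>t. f' t - g' t) integrable_on {0..T}"
    using W11D(1)[OF f] W11D(1)[OF g] by (rule integrable_diff)
  ultimately show ?thesis
    unfolding W11_def by blast
qed

section \<open>A Gronwall argument in steps\<close>

lemma piecewise_gronwall:
  fixes E W :: "real \<Rightarrow> real"
  assumes cont: "continuous_on {0..T} W" and "W 0 = 0" and "\<theta> > 0" and "A \<ge> 0" and "B \<ge> 0"
    and "E 0 = 0"
    and step: "\<And>s t. 0 \<le> s \<Longrightarrow> s \<le> t \<Longrightarrow> t \<le> T \<Longrightarrow> W t - W s \<le> \<theta> \<Longrightarrow> E t \<le> A + B * E s"
  shows "t \<in> {0..T} \<Longrightarrow> W t \<le> real n * \<theta> \<Longrightarrow> E t \<le> A * (B + 1) ^ n"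
proof (induction n arbitrary: t)
  case 0
  then have "E t \<le> A + B * E 0"
    using \<open>W 0 = 0\<close> \<open>\<theta> > 0\<close> by (intro step) auto
  then show ?case using \<open>E 0 = 0\<close> by simp
next
  case (Suc n)
  have "A \<le> A * (B + 1) ^ n"
    using \<open>A \<ge> 0\<close> \<open>B \<ge> 0\<close> by (simp add: mult_le_cancel_left1 one_le_power)
  show ?case
  proof (cases "W t \<le> real n * \<theta>")
    case True
    then have "E t \<le> A * (B + 1) ^ n" using Suc by blast
    also have "\<dots> \<le> A * (B + 1) ^ Suc n"
      using \<open>A \<ge> 0\<close> \<open>B \<ge> 0\<close> by (intro mult_left_mono power_increasing) auto
    finally show ?thesis .
  next
    case False
    have "continuous_on {0..t} W"
      by (rule continuous_on_subset[OF cont]) (use Suc.prems(1) in auto)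
    then obtain s where s: "0 \<le> s" "s \<le> t" "W s = real n * \<theta>"
      using IVT'[of W 0 "real n * \<theta>" t] Suc.prems False \<open>W 0 = 0\<close> \<open>\<theta> > 0\<close> by auto
    have "E t \<le> A + B * E s"
      using s Suc.prems by (intro step) (auto simp: algebra_simps)
    also have "\<dots> \<le> A + B * (A * (B + 1) ^ n)"
      using Suc.IH[of s] s Suc.prems \<open>B \<ge> 0\<close> by (intro add_left_mono mult_left_mono) auto
    also have "\<dots> \<le> A * (B + 1) ^ Suc n"
      using \<open>A \<le> A * (B + 1) ^ n\<close> by (simp add: algebra_simps)
    finally show ?thesis .
  qed
qed

definition gronwall_constant :: "real \<Rightarrow> real \<Rightarrow> real \<Rightarrow> nat \<Rightarrow> real" where
  "gronwall_constant \<kappa> C m n = (2 * (C + m) / \<kappa> + 1) * (3 + 2 * C / \<kappa>) ^ n"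

lemma gronwall_constant_pos:
  assumes "\<kappa> > 0" and "C \<ge> 0" and "m \<ge> 0"
  shows "gronwall_constant \<kappa> C m n > 0"
proof -
  have "2 * (C + m) / \<kappa> \<ge> 0" "2 * C / \<kappa> \<ge> 0" using assms by simp_all
  then show ?thesis
    unfolding gronwall_constant_def by (intro mult_pos_pos zero_less_power) linarith+
qed

text \<open>On a step \<open>[s, t]\<close> where \<open>\<beta>\<close> has mass at most \<open>\<kappa> / 2\<close>, the term \<open>(\<Delta> + E t) \<integral>\<^sub>s\<^sup>t \<beta>\<close> is
  absorbed by \<open>\<kappa> E t\<close>, which gives \<open>E t \<le> A \<Delta> + B E s\<close> with the factors of
  \<open>gronwall_constant\<close>.\<close>

lemma gronwall_differential_inequality:
  fixes e d \<beta> \<phi> h :: "real \<Rightarrow> real"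
  assumes "0 \<le> T" and "\<kappa> > 0" and "m \<ge> 0" and "C \<ge> 0"
    and e: "e integrable_on {0..T}" "\<And>t. 0 \<le> e t"
    and d: "d integrable_on {0..T}" "\<And>t. 0 \<le> d t" "integral {0..T} d \<le> \<Delta>"
    and \<beta>: "\<beta> integrable_on {0..T}" "\<And>t. 0 \<le> \<beta> t" "integral {0..T} \<beta> \<le> real n * (\<kappa> / 2)"
    and h: "h integrable_on {0..T}"
    and ctrl: "\<And>u v. 0 \<le> u \<Longrightarrow> u \<le> v \<Longrightarrow> v \<le> T \<Longrightarrow> \<bar>\<phi> v - \<phi> u\<bar> \<le> integral {u..v} h"
    and \<phi>: "\<And>t. t \<in> {0..T} \<Longrightarrow> 0 \<le> \<phi> t \<and> \<phi> t \<le> C * (\<Delta> + integral {0..t} e)"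
    and ineq: "ae_on {0..T} (\<lambda>t. \<exists>D. (\<phi> has_real_derivative D) (at t) \<and>
        \<kappa> * e t + D \<le> m * d t + \<beta> t * (\<Delta> + integral {0..t} e))"
  shows "integral {0..T} e \<le> gronwall_constant \<kappa> C m n * \<Delta>"
proof -
  define E where "E t = integral {0..t} e" for t
  define W where "W t = integral {0..t} \<beta>" for t
  have sub: "f integrable_on {s..t}" if "f integrable_on {0..T}" "0 \<le> s" "t \<le> T" for f :: "real \<Rightarrow> real" and s t
    using that(1) by (rule integrable_on_subinterval) (use that in auto)
  have increment: "integral {0..t} f - integral {0..s} f = integral {s..t} f"
    if "f integrable_on {0..T}" "0 \<le> s" "s \<le> t" "t \<le> T" for f :: "real \<Rightarrow> real" and s t
    using Henstock_Kurzweil_Integration.integral_combine[OF that(2,3) sub[OF that(1)]] that by simp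
  have E_mono: "E s \<le> E t" if "0 \<le> s" "s \<le> t" "t \<le> T" for s t
    using increment[OF e(1) that] integral_nonneg[OF sub[OF e(1) that(1,3)] e(2)] by (simp add: E_def)
  have "E 0 = 0" by (simp add: E_def)
  have "\<Delta> \<ge> 0"
    using integral_nonneg[OF d(1,2)] d(3) by linarith
  have step: "\<kappa> * (E t - E s) + (\<phi> t - \<phi> s) \<le> m * \<Delta> + (\<Delta> + E t) * (W t - W s)"
    if st: "0 \<le> s" "s \<le> t" "t \<le> T" for s t
  proof -
    have "integral {s..t} (\<lambda>r. \<kappa> * e r) + (\<phi> t - \<phi> s)
        \<le> integral {s..t} (\<lambda>r. m * d r + (\<Delta> + E t) * \<beta> r)"
    proof (rule integral_add_increment_le[OF \<open>s \<le> t\<close>])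
      show "(\<lambda>r. \<kappa> * e r) integrable_on {s..t}" "(\<lambda>r. m * d r + (\<Delta> + E t) * \<beta> r) integrable_on {s..t}"
        using sub[OF e(1) st(1,3)] sub[OF d(1) st(1,3)] sub[OF \<beta>(1) st(1,3)]
        by (auto intro!: integrable_add integrable_on_mult_right)
      show "h integrable_on {s..t}" using sub[OF h st(1,3)] .
      show "\<bar>\<phi> v - \<phi> u\<bar> \<le> integral {u..v} h" if "s \<le> u" "u \<le> v" "v \<le> t" for u v
        using ctrl that st by auto
      show "ae_on {s..t} (\<lambda>r. \<exists>D. (\<phi> has_real_derivative D) (at r) \<and> \<kappa> * e r + D \<le> m * d r + (\<Delta> + E t) * \<beta> r)"
      proof (rule ae_on_mono[of "{s..t}"])
        show "ae_on {s..t} (\<lambda>r. \<exists>D. (\<phi> has_real_derivative D) (at r) \<and> \<kappa> * e r + D \<le> m * d r + \<beta> r * (\<Delta> + E r))"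
          using ineq st unfolding ae_on_def E_def by (meson Diff_iff atLeastAtMost_iff order_trans)
        show "\<exists>D. (\<phi> has_real_derivative D) (at r) \<and> \<kappa> * e r + D \<le> m * d r + (\<Delta> + E t) * \<beta> r"
          if "r \<in> {s..t}" and "\<exists>D. (\<phi> has_real_derivative D) (at r) \<and> \<kappa> * e r + D \<le> m * d r + \<beta> r * (\<Delta> + E r)" for r
        proof -
          have "\<beta> r * (\<Delta> + E r) \<le> (\<Delta> + E t) * \<beta> r"
            using E_mono[of r t] that(1) st \<beta>(2)[of r] by (simp add: mult.commute mult_left_mono)
          with that(2) show ?thesis by force
        qed
      qed
    qed
    moreover have "integral {s..t} (\<lambda>r. \<kappa> * e r) = \<kappa> * (E t - E s)"
      using increment[OF e(1) st] by (simp add: E_def)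
    moreover have "integral {s..t} (\<lambda>r. m * d r + (\<Delta> + E t) * \<beta> r) = m * integral {s..t} d + (\<Delta> + E t) * (W t - W s)"
      using increment[OF \<beta>(1) st] sub[OF d(1) st(1,3)] sub[OF \<beta>(1) st(1,3)]
      by (simp add: W_def integral_add integrable_on_mult_right)
    moreover have "integral {s..t} d \<le> \<Delta>"
      using integral_subset_le[of "{s..t}" "{0..T}" d] sub[OF d(1) st(1,3)] d st by force
    ultimately show ?thesis
      using \<open>m \<ge> 0\<close> mult_left_mono[of "integral {s..t} d" \<Delta> m] by linarith
  qed
  have piece: "E t \<le> (2 * (C + m) / \<kappa> + 1) * \<Delta> + (2 + 2 * C / \<kappa>) * E s"
    if st: "0 \<le> s" "s \<le> t" "t \<le> T" and small: "W t - W s \<le> \<kappa> / 2" for s t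
  proof -
    have "0 \<le> \<Delta> + E t" using \<open>\<Delta> \<ge> 0\<close> E_mono[of 0 t] st \<open>E 0 = 0\<close> by simp
    with small have "(\<Delta> + E t) * (W t - W s) \<le> (\<Delta> + E t) * (\<kappa> / 2)"
      by (rule mult_left_mono)
    moreover have "0 \<le> \<phi> t" "\<phi> s \<le> C * (\<Delta> + E s)"
      using \<phi>[of t] \<phi>[of s] st by (auto simp: E_def)
    ultimately have "\<kappa> * E t \<le> (2 * (C + m) + \<kappa>) * \<Delta> + (2 * \<kappa> + 2 * C) * E s"
      using step[OF st] by (simp add: algebra_simps)
    also have "\<dots> = \<kappa> * ((2 * (C + m) / \<kappa> + 1) * \<Delta> + (2 + 2 * C / \<kappa>) * E s)"
      using \<open>\<kappa> > 0\<close> by (simp add: field_simps)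
    finally show ?thesis using \<open>\<kappa> > 0\<close> by simp
  qed
  have "E T \<le> ((2 * (C + m) / \<kappa> + 1) * \<Delta>) * ((2 + 2 * C / \<kappa>) + 1) ^ n"
  proof (rule piecewise_gronwall[where W = W and \<theta> = "\<kappa> / 2" and E = E and t = T])
    show "continuous_on {0..T} W"
      unfolding W_def by (rule indefinite_integral_continuous_1[OF \<beta>(1)])
    show "0 \<le> (2 * (C + m) / \<kappa> + 1) * \<Delta>" "0 \<le> 2 + 2 * C / \<kappa>"
      using \<open>\<kappa> > 0\<close> \<open>C \<ge> 0\<close> \<open>m \<ge> 0\<close> \<open>\<Delta> \<ge> 0\<close> by simp_all
    show "W T \<le> real n * (\<kappa> / 2)" using \<beta>(3) by (simp add: W_def)
  qed (use piece \<open>0 \<le> T\<close> \<open>\<kappa> > 0\<close> \<open>E 0 = 0\<close> in \<open>auto simp: W_def\<close>)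
  then show ?thesis
    by (simp add: E_def gronwall_constant_def algebra_simps)
qed

section \<open>Consequences of the standing hypotheses\<close>

lemma hyp_gD:
  assumes "hyp_g T g gt gu gxi a b \<gamma> \<omega> Cxi Cu"
  shows "continuous_on ({0..T} \<times> UNIV \<times> UNIV) (\<lambda>(t, u, xi). g t u xi)"
    and "\<And>t u xi. t \<in> {0..T} \<Longrightarrow> ((\<lambda>s. g s u xi) has_vector_derivative gt t u xi) (at t within {0..T})"
    and "\<And>t u xi. t \<in> {0..T} \<Longrightarrow> ((\<lambda>v. g t v xi) has_derivative gu t u xi) (at u)"
    and "\<And>t u xi. t \<in> {0..T} \<Longrightarrow> ((\<lambda>eta. g t u eta) has_derivative gxi t u xi) (at xi)"
    and "a integrable_on {0..T}" and "(\<lambda>t. \<bar>a t\<bar>) integrable_on {0..T}"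
    and "(\<lambda>t. \<bar>b t\<bar>) integrable_on {0..T}"
    and "\<gamma> > 0" and "\<omega> > 0"
    and "\<And>u xi. ae_on {0..T} (\<lambda>t. onorm (gxi t u xi) \<le> \<gamma> \<and> onorm (gu t u xi) \<le> \<omega> \<and> norm (gt t u xi) \<le> a t)"
proof -
  note g = assms[unfolded hyp_g_def]
  show "continuous_on ({0..T} \<times> UNIV \<times> UNIV) (\<lambda>(t, u, xi). g t u xi)"
    and "\<And>t u xi. t \<in> {0..T} \<Longrightarrow> ((\<lambda>s. g s u xi) has_vector_derivative gt t u xi) (at t within {0..T})"
    and "\<And>t u xi. t \<in> {0..T} \<Longrightarrow> ((\<lambda>v. g t v xi) has_derivative gu t u xi) (at u)"
    and "\<And>t u xi. t \<in> {0..T} \<Longrightarrow> ((\<lambda>eta. g t u eta) has_derivative gxi t u xi) (at xi)"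
    and "\<gamma> > 0" and "\<omega> > 0"
    using g by blast+
  show "a integrable_on {0..T}" "(\<lambda>t. \<bar>a t\<bar>) integrable_on {0..T}" "(\<lambda>t. \<bar>b t\<bar>) integrable_on {0..T}"
    using g unfolding absolutely_integrable_on_def by auto
  show "ae_on {0..T} (\<lambda>t. onorm (gxi t u xi) \<le> \<gamma> \<and> onorm (gu t u xi) \<le> \<omega> \<and> norm (gt t u xi) \<le> a t)" for u xi
    using g by (elim conjE allE[of _ u] allE[of _ u] allE[of _ xi] allE[of _ xi] ae_on_mono) auto
qed

lemma hyp_HD:
  assumes "hyp_H G Gx lam c L \<mu>1 \<mu>2"
  shows "c > 0" and "L > 0"
    and "\<And>x w w'. \<bar>G x w - G x w'\<bar> \<le> L * norm (w - w')"
    and "\<And>x w v. ((\<lambda>s. G (x + s *\<^sub>R v) w) has_real_derivative inner (Gx x w) v) (at 0)"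
  using assms unfolding hyp_H_def by blast+

lemma hyp_LD:
  assumes "hyp_L G Gx Gw K0 K1 C0 C1"
  shows "K0 > 0" and "\<And>x w. norm (Gx x w) \<le> K0"
  using assms unfolding hyp_L_def by blast+

lemma G_lipschitz_x:
  assumes H: "hyp_H G Gx lam c L \<mu>1 \<mu>2" and Lh: "hyp_L G Gx Gw K0 K1 C0 C1"
  shows "\<bar>G x w - G y w\<bar> \<le> K0 * norm (x - y)"
proof -
  define d where "d = x - y"
  define p where "p s = G (y + s *\<^sub>R d) w" for s
  have "(p has_real_derivative inner (Gx (y + s *\<^sub>R d) w) d) (at s)" for s
  proof -
    have "((\<lambda>r. p (r + s)) has_real_derivative inner (Gx (y + s *\<^sub>R d) w) d) (at 0)"
      using hyp_HD(4)[OF H, where x = "y + s *\<^sub>R d" and w = w and v = d]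
      by (simp add: p_def algebra_simps scaleR_add_left)
    then show ?thesis using DERIV_shift[of p _ 0 s] by simp
  qed
  then obtain z where "p 1 - p 0 = inner (Gx (y + z *\<^sub>R d) w) d"
    using MVT2[of 0 1 p "\<lambda>s. inner (Gx (y + s *\<^sub>R d) w) d"] by auto
  then have "\<bar>p 1 - p 0\<bar> \<le> norm (Gx (y + z *\<^sub>R d) w) * norm d"
    using Cauchy_Schwarz_ineq2 by simp
  also have "\<dots> \<le> K0 * norm d"
    using hyp_LD(2)[OF Lh] by (intro mult_right_mono) auto
  finally show ?thesis by (simp add: p_def d_def)
qed

lemma G_lipschitz:
  assumes "hyp_H G Gx lam c L \<mu>1 \<mu>2" and "hyp_L G Gx Gw K0 K1 C0 C1"
  shows "\<bar>G x w - G x' w'\<bar> \<le> K0 * norm (x - x') + L * norm (w - w')"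
  using G_lipschitz_x[OF assms, of x w x'] hyp_HD(3)[OF assms(1), of x' w w'] by linarith

lemma g_lipschitz:
  assumes "0 < T" and gh: "hyp_g T g gt gu gxi a b \<gamma> \<omega> Cxi Cu" and t: "t \<in> {0..T}"
  shows "norm (g t p q - g t p' q') \<le> \<omega> * norm (p - p') + \<gamma> * norm (q - q')"
proof -
  have cont: "continuous_on ({0..T} \<times> UNIV) (\<lambda>(t, x). g t (fst x) (snd x))"
    using hyp_gD(1)[OF gh] by (simp add: split_def)
  have "continuous_on ({0..T} \<times> UNIV) ((\<lambda>(t, x). g t (fst x) (snd x)) \<circ> (\<lambda>z. (fst z, (snd z, v))))"
    and "continuous_on ({0..T} \<times> UNIV) ((\<lambda>(t, x). g t (fst x) (snd x)) \<circ> (\<lambda>z. (fst z, (v, snd z))))" for v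
    by (intro continuous_on_compose continuous_intros continuous_on_subset[OF cont]; force)+
  then have cont_u: "continuous_on ({0..T} \<times> UNIV) (\<lambda>(t, u). g t u v)"
    and cont_xi: "continuous_on ({0..T} \<times> UNIV) (\<lambda>(t, xi). g t v xi)" for v
    by (simp_all add: o_def split_def)
  have "norm (g t p q - g t p' q) \<le> \<omega> * norm (p - p')"
  proof (rule differentiable_bound_ae[OF \<open>0 < T\<close> cont_u _ _ t])
    show "((\<lambda>v. g \<tau> v q) has_derivative gu \<tau> x q) (at x)" if "\<tau> \<in> {0..T}" for \<tau> x
      using hyp_gD(3)[OF gh that] .
    show "ae_on {0..T} (\<lambda>\<tau>. onorm (gu \<tau> x q) \<le> \<omega>)" for x
      by (rule ae_on_mono[OF hyp_gD(10)[OF gh, of x q]]) blast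
  qed
  moreover have "norm (g t p' q - g t p' q') \<le> \<gamma> * norm (q - q')"
  proof (rule differentiable_bound_ae[OF \<open>0 < T\<close> cont_xi _ _ t])
    show "((\<lambda>v. g \<tau> p' v) has_derivative gxi \<tau> p' x) (at x)" if "\<tau> \<in> {0..T}" for \<tau> x
      using hyp_gD(4)[OF gh that] .
    show "ae_on {0..T} (\<lambda>\<tau>. onorm (gxi \<tau> p' x) \<le> \<gamma>)" for x
      by (rule ae_on_mono[OF hyp_gD(10)[OF gh, of p' x]]) blast
  qed
  ultimately show ?thesis
    by (rule norm_diff_triangle_le)
qed

lemma g_time_increment:
  assumes gh: "hyp_g T g gt gu gxi a b \<gamma> \<omega> Cxi Cu" and "0 \<le> r" "r \<le> s" "s \<le> T"
  shows "norm (g s p q - g r p q) \<le> integral {r..s} a"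
proof (rule norm_diff_le_integral_ae_bound)
  show "((\<lambda>t. g t p q) has_vector_derivative gt t p q) (at t within {r..s})" if "t \<in> {r..s}" for t
    by (rule has_vector_derivative_within_subset[OF hyp_gD(2)[OF gh]]) (use that assms in auto)
  show "a integrable_on {r..s}"
    using hyp_gD(5)[OF gh] by (rule integrable_on_subinterval) (use assms in auto)
  show "ae_on {r..s} (\<lambda>t. norm (gt t p q) \<le> a t)"
    using hyp_gD(10)[OF gh, of p q] assms unfolding ae_on_def by fastforce
qed fact

lemma constraint_lipschitz:
  assumes "0 < T" and H: "hyp_H G Gx lam c L \<mu>1 \<mu>2" and Lh: "hyp_L G Gx Gw K0 K1 C0 C1"
    and gh: "hyp_g T g gt gu gxi a b \<gamma> \<omega> Cxi Cu" and t: "t \<in> {0..T}"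
  shows "\<bar>G (p - q) (g t p q) - G (p' - q') (g t p' q')\<bar>
    \<le> (K0 + L * (\<omega> + \<gamma>)) * (norm (p - p') + norm (q - q'))"
proof -
  have "K0 > 0" "L > 0" "\<omega> > 0" "\<gamma> > 0"
    using hyp_LD(1)[OF Lh] hyp_HD(2)[OF H] hyp_gD(8,9)[OF gh] by auto
  have "norm ((p - q) - (p' - q')) \<le> norm (p - p') + norm (q - q')"
    using norm_triangle_ineq4[of "p - p'" "q - q'"] by (simp add: algebra_simps)
  have "\<bar>G (p - q) (g t p q) - G (p' - q') (g t p' q')\<bar>
      \<le> K0 * norm ((p - q) - (p' - q')) + L * norm (g t p q - g t p' q')"
    by (rule G_lipschitz[OF H Lh])
  also have "\<dots> \<le> K0 * (norm (p - p') + norm (q - q')) + L * (\<omega> * norm (p - p') + \<gamma> * norm (q - q'))"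
    using \<open>norm ((p - q) - (p' - q')) \<le> _\<close> g_lipschitz[OF \<open>0 < T\<close> gh t] \<open>K0 > 0\<close> \<open>L > 0\<close>
    by (intro add_mono mult_left_mono) auto
  also have "\<dots> \<le> (K0 + L * (\<omega> + \<gamma>)) * (norm (p - p') + norm (q - q'))"
    using \<open>L > 0\<close> \<open>\<omega> > 0\<close> \<open>\<gamma> > 0\<close> by (simp add: algebra_simps)
  finally show ?thesis .
qed

lemma constraint_increment_le:
  assumes "0 < T" and H: "hyp_H G Gx lam c L \<mu>1 \<mu>2" and Lh: "hyp_L G Gx Gw K0 K1 C0 C1"
    and gh: "hyp_g T g gt gu gxi a b \<gamma> \<omega> Cxi Cu"
    and u: "W11 T u u'" and \<xi>: "W11 T \<xi> \<xi>'" and rs: "0 \<le> r" "r \<le> s" "s \<le> T"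
  shows "\<bar>G (u s - \<xi> s) (g s (u s) (\<xi> s)) - G (u r - \<xi> r) (g r (u r) (\<xi> r))\<bar>
    \<le> integral {r..s} (\<lambda>t. (K0 + L * (\<omega> + \<gamma>)) * (norm (u' t) + norm (\<xi>' t)) + L * a t)"
proof -
  define C where "C = K0 + L * (\<omega> + \<gamma>)"
  have "C \<ge> 0" "L > 0"
    using hyp_LD(1)[OF Lh] hyp_HD(2)[OF H] hyp_gD(8,9)[OF gh] by (auto simp: C_def)
  have "\<bar>G (u s - \<xi> s) (g s (u s) (\<xi> s)) - G (u r - \<xi> r) (g s (u r) (\<xi> r))\<bar>
      \<le> C * (norm (u s - u r) + norm (\<xi> s - \<xi> r))"
    unfolding C_def using rs by (intro constraint_lipschitz[OF \<open>0 < T\<close> H Lh gh]) auto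
  also have "\<dots> \<le> C * (integral {r..s} (\<lambda>t. norm (u' t)) + integral {r..s} (\<lambda>t. norm (\<xi>' t)))"
    using \<open>C \<ge> 0\<close> W11_norm_increment_le[OF u rs] W11_norm_increment_le[OF \<xi> rs]
    by (intro mult_left_mono add_mono) auto
  finally have state: "\<bar>G (u s - \<xi> s) (g s (u s) (\<xi> s)) - G (u r - \<xi> r) (g s (u r) (\<xi> r))\<bar>
      \<le> C * (integral {r..s} (\<lambda>t. norm (u' t)) + integral {r..s} (\<lambda>t. norm (\<xi>' t)))" .
  have time: "\<bar>G (u r - \<xi> r) (g s (u r) (\<xi> r)) - G (u r - \<xi> r) (g r (u r) (\<xi> r))\<bar> \<le> L * integral {r..s} a"
    using hyp_HD(3)[OF H] g_time_increment[OF gh rs] \<open>L > 0\<close>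
    by (meson mult_left_mono order_trans less_imp_le)
  have "a integrable_on {r..s}"
    using hyp_gD(5)[OF gh] by (rule integrable_on_subinterval) (use rs in auto)
  then have "((\<lambda>t. C * (norm (u' t) + norm (\<xi>' t)) + L * a t) has_integral
      C * (integral {r..s} (\<lambda>t. norm (u' t)) + integral {r..s} (\<lambda>t. norm (\<xi>' t))) + L * integral {r..s} a) {r..s}"
    using W11_integrable_on(2)[OF u rs(1,3)] W11_integrable_on(2)[OF \<xi> rs(1,3)]
    by (intro has_integral_add has_integral_mult_right integrable_integral)
  with state time show ?thesis
    unfolding C_def[symmetric] by (simp add: integral_unique)
qed

lemma sweeping_pair_estimate:
  fixes G :: "'x::{real_inner,banach} \<Rightarrow> 'w::banach \<Rightarrow> real"
    and u1 u2 \<xi>1 \<xi>2 u1' u2' \<xi>1' \<xi>2' :: "real \<Rightarrow> 'x"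
  assumes "0 < T" and H: "hyp_H G Gx lam c L \<mu>1 \<mu>2" and Lh: "hyp_L G Gx Gw K0 K1 C0 C1"
    and gh: "hyp_g T g gt gu gxi a b \<gamma> \<omega> Cxi Cu" and "\<delta> < 1" and "m0 > 0" and "m1 > 0"
    and u1: "W11 T u1 u1'" and u2: "W11 T u2 u2'" and \<xi>1: "W11 T \<xi>1 \<xi>1'" and \<xi>2: "W11 T \<xi>2 \<xi>2'"
    and init: "u1 0 - \<xi>1 0 = x01" "u2 0 - \<xi>2 0 = x02"
    and U: "integral {0..T} (\<lambda>t. norm (u1' t)) \<le> U"
    and ineq: "ae_on {0..T} (\<lambda>t. \<exists>D.
          ((\<lambda>s. \<bar>G (u1 s - \<xi>1 s) (g s (u1 s) (\<xi>1 s)) - G (u2 s - \<xi>2 s) (g s (u2 s) (\<xi>2 s))\<bar>)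
             has_real_derivative D) (at t) \<and>
          norm (\<xi>1' t - \<xi>2' t) + D / c
            \<le> m1 * norm (u1' t - u2' t) + \<delta> * norm (\<xi>1' t - \<xi>2' t)
              + m0 * (a t + b t + norm (u1' t))
                  * (norm (u1 t - u2 t) + norm (\<xi>1 t - \<xi>2 t) + norm (\<xi>1 t - \<xi>2 t)))"
  shows "integral {0..T} (\<lambda>t. norm (\<xi>1' t - \<xi>2' t))
    \<le> gronwall_constant (1 - \<delta>) (2 * (K0 + L * (\<omega> + \<gamma>)) / c) m1
         (nat \<lceil>6 * m0 * (integral {0..T} (\<lambda>t. \<bar>a t\<bar>) + integral {0..T} (\<lambda>t. \<bar>b t\<bar>) + U) / (1 - \<delta>)\<rceil>)
       * (norm (x01 - x02) + norm (u1 0 - u2 0) + integral {0..T} (\<lambda>t. norm (u1' t - u2' t)))"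
    (is "_ \<le> gronwall_constant ?\<kappa> _ _ ?n * ?\<Delta>")
proof -
  define C where "C = K0 + L * (\<omega> + \<gamma>)"
  let ?\<Psi> = "\<lambda>u \<xi> s. G (u s - \<xi> s) (g s (u s) (\<xi> s))"
  define E where "E t = integral {0..t} (\<lambda>t. norm (\<xi>1' t - \<xi>2' t))" for t
  define \<beta> where "\<beta> t = 3 * m0 * (\<bar>a t\<bar> + \<bar>b t\<bar> + norm (u1' t))" for t
  define h1 where "h1 u' \<xi>' t = C * (norm (u' t) + norm (\<xi>' t)) + L * a t" for u' \<xi>' :: "real \<Rightarrow> 'x" and t
  have "c > 0" "C \<ge> 0" "?\<kappa> > 0"
    using hyp_HD(1,2)[OF H] hyp_LD(1)[OF Lh] hyp_gD(8,9)[OF gh] \<open>\<delta> < 1\<close> by (auto simp: C_def)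
  have u: "W11 T (\<lambda>t. u1 t - u2 t) (\<lambda>t. u1' t - u2' t)" and \<xi>: "W11 T (\<lambda>t. \<xi>1 t - \<xi>2 t) (\<lambda>t. \<xi>1' t - \<xi>2' t)"
    using W11_diff[OF _ u1 u2] W11_diff[OF _ \<xi>1 \<xi>2] \<open>0 < T\<close> by auto
  have E_nonneg: "E t \<ge> 0" if "t \<in> {0..T}" for t
    unfolding E_def using W11_integrable_on(2)[OF \<xi>, of 0 t] that by (intro integral_nonneg) auto
  have dist_u: "norm (u1 t - u2 t) \<le> ?\<Delta>" if "t \<in> {0..T}" for t
    using W11_norm_le[OF u that] norm_ge_zero[of "x01 - x02"] by linarith
  have dist_\<xi>: "norm (\<xi>1 t - \<xi>2 t) \<le> ?\<Delta> + E t" if "t \<in> {0..T}" for t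
  proof -
    have "norm ((\<xi>1 t - \<xi>2 t) - (\<xi>1 0 - \<xi>2 0)) \<le> E t"
      using W11_norm_increment_le[OF \<xi>, of 0 t] that by (simp add: E_def)
    moreover have "\<xi>1 0 - \<xi>2 0 = (u1 0 - u2 0) - (x01 - x02)"
      using init by (simp add: algebra_simps)
    moreover have "integral {0..T} (\<lambda>t. norm (u1' t - u2' t)) \<ge> 0"
      using W11D(2)[OF u] by (rule integral_nonneg) simp
    ultimately show ?thesis
      using norm_triangle_ineq4[of "u1 0 - u2 0" "x01 - x02"]
        norm_triangle_sub[of "\<xi>1 t - \<xi>2 t" "\<xi>1 0 - \<xi>2 0"] by simp
  qed
  have "integral {0..T} (\<lambda>t. norm (\<xi>1' t - \<xi>2' t)) \<le> gronwall_constant ?\<kappa> (2 * C / c) m1 ?n * ?\<Delta>"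
  proof (rule gronwall_differential_inequality[where \<phi> = "\<lambda>s. \<bar>?\<Psi> u1 \<xi>1 s - ?\<Psi> u2 \<xi>2 s\<bar> / c"
        and h = "\<lambda>t. (h1 u1' \<xi>1' t + h1 u2' \<xi>2' t) / c" and \<beta> = \<beta>])
    show "0 \<le> T" "?\<kappa> > 0" "m1 \<ge> 0" "2 * C / c \<ge> 0"
      using \<open>0 < T\<close> \<open>?\<kappa> > 0\<close> \<open>m1 > 0\<close> \<open>C \<ge> 0\<close> \<open>c > 0\<close> by auto
    show "(\<lambda>t. norm (\<xi>1' t - \<xi>2' t)) integrable_on {0..T}" "(\<lambda>t. norm (u1' t - u2' t)) integrable_on {0..T}"
      using W11D(2)[OF \<xi>] W11D(2)[OF u] .
    show "integral {0..T} (\<lambda>t. norm (u1' t - u2' t)) \<le> ?\<Delta>" by simp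
    have "(\<beta> has_integral 3 * m0 * (integral {0..T} (\<lambda>t. \<bar>a t\<bar>) + integral {0..T} (\<lambda>t. \<bar>b t\<bar>)
        + integral {0..T} (\<lambda>t. norm (u1' t)))) {0..T}"
      unfolding \<beta>_def using hyp_gD(6,7)[OF gh] W11D(2)[OF u1]
      by (intro has_integral_mult_right has_integral_add integrable_integral)
    moreover have "3 * m0 * (integral {0..T} (\<lambda>t. \<bar>a t\<bar>) + integral {0..T} (\<lambda>t. \<bar>b t\<bar>) + U) \<le> real ?n * (?\<kappa> / 2)"
      using real_nat_ceiling_ge[of "6 * m0 * (integral {0..T} (\<lambda>t. \<bar>a t\<bar>) + integral {0..T} (\<lambda>t. \<bar>b t\<bar>) + U) / ?\<kappa>"]
        \<open>?\<kappa> > 0\<close> by (simp add: field_simps)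
    moreover have "3 * m0 * (integral {0..T} (\<lambda>t. \<bar>a t\<bar>) + integral {0..T} (\<lambda>t. \<bar>b t\<bar>)
        + integral {0..T} (\<lambda>t. norm (u1' t))) \<le> 3 * m0 * (integral {0..T} (\<lambda>t. \<bar>a t\<bar>) + integral {0..T} (\<lambda>t. \<bar>b t\<bar>) + U)"
      using U \<open>m0 > 0\<close> by (intro mult_left_mono) auto
    ultimately show "\<beta> integrable_on {0..T}" "integral {0..T} \<beta> \<le> real ?n * (?\<kappa> / 2)"
      by (auto simp: integral_unique)
    show "0 \<le> \<beta> t" for t using \<open>m0 > 0\<close> by (simp add: \<beta>_def)
    have h1_int: "h1 u' \<xi>' integrable_on {0..T}" if "W11 T u u'" "W11 T \<xi> \<xi>'" for u u' \<xi> \<xi>' :: "real \<Rightarrow> 'x"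
      unfolding h1_def using W11D(2)[OF that(1)] W11D(2)[OF that(2)] hyp_gD(5)[OF gh]
      by (intro integrable_add integrable_on_mult_right)
    then show "(\<lambda>t. (h1 u1' \<xi>1' t + h1 u2' \<xi>2' t) / c) integrable_on {0..T}"
      using h1_int[OF u1 \<xi>1] h1_int[OF u2 \<xi>2] by (intro integrable_on_divide integrable_add)
    show "\<bar>\<bar>?\<Psi> u1 \<xi>1 v - ?\<Psi> u2 \<xi>2 v\<bar> / c - \<bar>?\<Psi> u1 \<xi>1 r - ?\<Psi> u2 \<xi>2 r\<bar> / c\<bar>
        \<le> integral {r..v} (\<lambda>t. (h1 u1' \<xi>1' t + h1 u2' \<xi>2' t) / c)" if rv: "0 \<le> r" "r \<le> v" "v \<le> T" for r v
    proof -
      have "\<bar>?\<Psi> u \<xi> v - ?\<Psi> u \<xi> r\<bar> \<le> integral {r..v} (h1 u' \<xi>')" if "W11 T u u'" "W11 T \<xi> \<xi>'" for u u' \<xi> \<xi>'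
        using constraint_increment_le[OF \<open>0 < T\<close> H Lh gh that rv] by (simp add: h1_def[abs_def] C_def)
      from this[OF u1 \<xi>1] this[OF u2 \<xi>2]
      have "\<bar>\<bar>?\<Psi> u1 \<xi>1 v - ?\<Psi> u2 \<xi>2 v\<bar> - \<bar>?\<Psi> u1 \<xi>1 r - ?\<Psi> u2 \<xi>2 r\<bar>\<bar>
          \<le> integral {r..v} (h1 u1' \<xi>1') + integral {r..v} (h1 u2' \<xi>2')"
        by linarith
      moreover have "h1 u' \<xi>' integrable_on {r..v}" if "W11 T u u'" "W11 T \<xi> \<xi>'" for u u' \<xi> \<xi>'
        by (rule integrable_on_subinterval[OF h1_int[OF that]]) (use rv in auto)
      then have "integral {r..v} (\<lambda>t. (h1 u1' \<xi>1' t + h1 u2' \<xi>2' t) / c)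
          = (integral {r..v} (h1 u1' \<xi>1') + integral {r..v} (h1 u2' \<xi>2')) / c"
        using u1 u2 \<xi>1 \<xi>2 by (simp add: integral_add)
      moreover have "\<bar>x / c - y / c\<bar> = \<bar>x - y\<bar> / c" for x y
        using \<open>c > 0\<close> by (simp add: diff_divide_distrib[symmetric])
      ultimately show ?thesis
        using \<open>c > 0\<close> by (simp add: divide_right_mono)
    qed
    show "0 \<le> \<bar>?\<Psi> u1 \<xi>1 t - ?\<Psi> u2 \<xi>2 t\<bar> / c \<and>
        \<bar>?\<Psi> u1 \<xi>1 t - ?\<Psi> u2 \<xi>2 t\<bar> / c \<le> 2 * C / c * (?\<Delta> + integral {0..t} (\<lambda>t. norm (\<xi>1' t - \<xi>2' t)))"
      if t: "t \<in> {0..T}" for t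
    proof -
      have "\<bar>?\<Psi> u1 \<xi>1 t - ?\<Psi> u2 \<xi>2 t\<bar> \<le> C * (norm (u1 t - u2 t) + norm (\<xi>1 t - \<xi>2 t))"
        unfolding C_def by (rule constraint_lipschitz[OF \<open>0 < T\<close> H Lh gh t])
      also have "\<dots> \<le> C * (2 * (?\<Delta> + E t))"
        using dist_u[OF t] dist_\<xi>[OF t] E_nonneg[OF t] \<open>C \<ge> 0\<close> by (intro mult_left_mono) auto
      also have "\<dots> = 2 * C * (?\<Delta> + E t)" by simp
      finally have "\<bar>?\<Psi> u1 \<xi>1 t - ?\<Psi> u2 \<xi>2 t\<bar> / c \<le> 2 * C * (?\<Delta> + E t) / c"
        using \<open>c > 0\<close> by (simp add: divide_right_mono)
      then show ?thesis
        using \<open>c > 0\<close> by (simp add: E_def)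
    qed
    show "ae_on {0..T} (\<lambda>t. \<exists>D. ((\<lambda>s. \<bar>?\<Psi> u1 \<xi>1 s - ?\<Psi> u2 \<xi>2 s\<bar> / c) has_real_derivative D) (at t) \<and>
        ?\<kappa> * norm (\<xi>1' t - \<xi>2' t) + D \<le> m1 * norm (u1' t - u2' t) + \<beta> t * (?\<Delta> + integral {0..t} (\<lambda>t. norm (\<xi>1' t - \<xi>2' t))))"
    proof -
      have pointwise: "\<exists>D'. ((\<lambda>s. \<bar>?\<Psi> u1 \<xi>1 s - ?\<Psi> u2 \<xi>2 s\<bar> / c) has_real_derivative D') (at t) \<and>
          ?\<kappa> * norm (\<xi>1' t - \<xi>2' t) + D' \<le> m1 * norm (u1' t - u2' t) + \<beta> t * (?\<Delta> + integral {0..t} (\<lambda>t. norm (\<xi>1' t - \<xi>2' t)))"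
        if t: "t \<in> {0..T}" and D: "((\<lambda>s. \<bar>?\<Psi> u1 \<xi>1 s - ?\<Psi> u2 \<xi>2 s\<bar>) has_real_derivative D) (at t)" and le: "norm (\<xi>1' t - \<xi>2' t) + D / c
            \<le> m1 * norm (u1' t - u2' t) + \<delta> * norm (\<xi>1' t - \<xi>2' t)
              + m0 * (a t + b t + norm (u1' t))
                  * (norm (u1 t - u2 t) + norm (\<xi>1 t - \<xi>2 t) + norm (\<xi>1 t - \<xi>2 t))" for t D
      proof (intro exI conjI)
        show "((\<lambda>s. \<bar>?\<Psi> u1 \<xi>1 s - ?\<Psi> u2 \<xi>2 s\<bar> / c) has_real_derivative D / c) (at t)"
          using DERIV_cdivide[OF D] .
        let ?X = "norm (u1 t - u2 t) + norm (\<xi>1 t - \<xi>2 t) + norm (\<xi>1 t - \<xi>2 t)"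
        have "m0 * (a t + b t + norm (u1' t)) \<le> \<beta> t / 3"
          using \<open>m0 > 0\<close> by (simp add: \<beta>_def)
        then have "m0 * (a t + b t + norm (u1' t)) * ?X \<le> \<beta> t / 3 * ?X"
          by (rule mult_right_mono) simp
        also have "\<dots> \<le> \<beta> t / 3 * (3 * (?\<Delta> + E t))"
          using dist_u[OF t] dist_\<xi>[OF t] E_nonneg[OF t] \<open>m0 > 0\<close>
          by (intro mult_left_mono) (auto simp: \<beta>_def)
        also have "\<dots> = \<beta> t * (?\<Delta> + integral {0..t} (\<lambda>t. norm (\<xi>1' t - \<xi>2' t)))"
          by (simp add: E_def)
        finally have "m0 * (a t + b t + norm (u1' t)) * ?X
            \<le> \<beta> t * (?\<Delta> + integral {0..t} (\<lambda>t. norm (\<xi>1' t - \<xi>2' t)))" .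
        moreover have "?\<kappa> * norm (\<xi>1' t - \<xi>2' t) = norm (\<xi>1' t - \<xi>2' t) - \<delta> * norm (\<xi>1' t - \<xi>2' t)"
          by (simp add: left_diff_distrib)
        ultimately show "?\<kappa> * norm (\<xi>1' t - \<xi>2' t) + D / c
            \<le> m1 * norm (u1' t - u2' t) + \<beta> t * (?\<Delta> + integral {0..t} (\<lambda>t. norm (\<xi>1' t - \<xi>2' t)))"
          using le by linarith
      qed
      show ?thesis
        using ineq by (rule ae_on_mono) (elim exE conjE, rule pointwise)
    qed
  qed simp_all
  then show ?thesis by (simp add: C_def)
qed

lemma state_dependent_sweeping_estimate:
  fixes G :: "'x::{real_inner,banach} \<Rightarrow> 'w::banach \<Rightarrow> real"
  assumes T: "0 < T"
    and H: "hyp_H G Gx lam c L \<mu>1 \<mu>2"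
    and Lh: "hyp_L G Gx Gw K0 K1 C0 C1"
    and gh: "hyp_g T g gt gu gxi a b \<gamma> \<omega> Cxi Cu"
    and delta: "K1 * \<gamma> / c < 1"
    and m0: "m0 > 0" and m1: "m1 > 0"
    and key: "\<And>u1 u1' u2 u2' x01 x02 eta1 eta1' eta2 eta2' xi1 xi1' xi2 xi2'.
       W11 T u1 u1' \<Longrightarrow> W11 T u2 u2' \<Longrightarrow>
       x01 \<in> Zset G (g 0 (u1 0) (u1 0 - x01)) \<Longrightarrow>
       x02 \<in> Zset G (g 0 (u2 0) (u2 0 - x02)) \<Longrightarrow>
       in_Omega T (K1 * \<gamma> / c) \<omega> K1 c a u1 u1' x01 eta1 eta1' \<Longrightarrow>
       in_Omega T (K1 * \<gamma> / c) \<omega> K1 c a u2 u2' x02 eta2 eta2' \<Longrightarrow>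
       sweep_sol G (c / lam) T u1 (\<lambda>t. g t (u1 t) (eta1 t)) x01 xi1 xi1' \<Longrightarrow>
       sweep_sol G (c / lam) T u2 (\<lambda>t. g t (u2 t) (eta2 t)) x02 xi2 xi2' \<Longrightarrow>
       ae_on {0..T} (\<lambda>t. \<exists>D.
          ((\<lambda>s. \<bar>G (u1 s - xi1 s) (g s (u1 s) (eta1 s)) - G (u2 s - xi2 s) (g s (u2 s) (eta2 s))\<bar>)
             has_real_derivative D) (at t) \<and>
          norm (xi1' t - xi2' t) + D / c
            \<le> m1 * norm (u1' t - u2' t) + (K1 * \<gamma> / c) * norm (eta1' t - eta2' t)
              + m0 * (a t + b t + norm (u1' t))
                  * (norm (u1 t - u2 t) + norm (xi1 t - xi2 t) + norm (eta1 t - eta2 t)))"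
    and u1: "W11 T u1 u1'" and u2: "W11 T u2 u2'"
    and U: "integral {0..T} (\<lambda>t. norm (u1' t)) \<le> U"
    and Z1: "x01 \<in> Zset G (g 0 (u1 0) (u1 0 - x01))" and Z2: "x02 \<in> Zset G (g 0 (u2 0) (u2 0 - x02))"
    and O1: "in_Omega T (K1 * \<gamma> / c) \<omega> K1 c a u1 u1' x01 xi1 xi1'"
    and O2: "in_Omega T (K1 * \<gamma> / c) \<omega> K1 c a u2 u2' x02 xi2 xi2'"
    and S1: "sweep_sol G (c / lam) T u1 (\<lambda>t. g t (u1 t) (xi1 t)) x01 xi1 xi1'"
    and S2: "sweep_sol G (c / lam) T u2 (\<lambda>t. g t (u2 t) (xi2 t)) x02 xi2 xi2'"
  shows "integral {0..T} (\<lambda>t. norm (xi1' t - xi2' t))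
    \<le> gronwall_constant (1 - K1 * \<gamma> / c) (2 * (K0 + L * (\<omega> + \<gamma>)) / c) m1
         (nat \<lceil>6 * m0 * (integral {0..T} (\<lambda>t. \<bar>a t\<bar>) + integral {0..T} (\<lambda>t. \<bar>b t\<bar>) + U) / (1 - K1 * \<gamma> / c)\<rceil>)
       * (norm (x01 - x02) + norm (u1 0 - u2 0) + integral {0..T} (\<lambda>t. norm (u1' t - u2' t)))"
proof (rule sweeping_pair_estimate[OF T H Lh gh delta m0 m1 u1 u2 _ _ _ _ U key[OF u1 u2 Z1 Z2 O1 O2 S1 S2]])
  show "W11 T xi1 xi1'" "W11 T xi2 xi2'"
    using O1 O2 unfolding in_Omega_def by blast+
  show "u1 0 - xi1 0 = x01" "u2 0 - xi2 0 = x02"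
    using S1 S2 unfolding sweep_sol_def by blast+
qed

theorem corollary4p5:
  fixes G :: "'x::{real_inner,banach} \<Rightarrow> 'w::banach \<Rightarrow> real"
    and Gx :: "'x \<Rightarrow> 'w \<Rightarrow> 'x" and Gw :: "'x \<Rightarrow> 'w \<Rightarrow> 'w \<Rightarrow> real"
    and g :: "real \<Rightarrow> 'x \<Rightarrow> 'x \<Rightarrow> 'w" and gt :: "real \<Rightarrow> 'x \<Rightarrow> 'x \<Rightarrow> 'w"
    and gu gxi :: "real \<Rightarrow> 'x \<Rightarrow> 'x \<Rightarrow> 'x \<Rightarrow> 'w"
    and a b :: "real \<Rightarrow> real"
    and T lam c L K0 K1 C0 C1 \<gamma> \<omega> Cxi Cu m0 m1 :: real
    and \<mu>1 :: "'w \<Rightarrow> real \<Rightarrow> real" and \<mu>2 :: "real \<Rightarrow> real"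
  assumes T: "0 < T"
    and H: "hyp_H G Gx lam c L \<mu>1 \<mu>2"
    and Lh: "hyp_L G Gx Gw K0 K1 C0 C1"
    and gh: "hyp_g T g gt gu gxi a b \<gamma> \<omega> Cxi Cu"
    and delta: "K1 * \<gamma> / c < 1"
    and m0: "m0 > 0" and m1: "m1 > 0"
    and key: "\<And>u1 u1' u2 u2' x01 x02 eta1 eta1' eta2 eta2' xi1 xi1' xi2 xi2'.
       W11 T u1 u1' \<Longrightarrow> W11 T u2 u2' \<Longrightarrow>
       x01 \<in> Zset G (g 0 (u1 0) (u1 0 - x01)) \<Longrightarrow>
       x02 \<in> Zset G (g 0 (u2 0) (u2 0 - x02)) \<Longrightarrow>
       in_Omega T (K1 * \<gamma> / c) \<omega> K1 c a u1 u1' x01 eta1 eta1' \<Longrightarrow>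
       in_Omega T (K1 * \<gamma> / c) \<omega> K1 c a u2 u2' x02 eta2 eta2' \<Longrightarrow>
       sweep_sol G (c / lam) T u1 (\<lambda>t. g t (u1 t) (eta1 t)) x01 xi1 xi1' \<Longrightarrow>
       sweep_sol G (c / lam) T u2 (\<lambda>t. g t (u2 t) (eta2 t)) x02 xi2 xi2' \<Longrightarrow>
       ae_on {0..T} (\<lambda>t. \<exists>D.
          ((\<lambda>s. \<bar>G (u1 s - xi1 s) (g s (u1 s) (eta1 s)) - G (u2 s - xi2 s) (g s (u2 s) (eta2 s))\<bar>)
             has_real_derivative D) (at t) \<and>
          norm (xi1' t - xi2' t) + D / c
            \<le> m1 * norm (u1' t - u2' t) + (K1 * \<gamma> / c) * norm (eta1' t - eta2' t)
              + m0 * (a t + b t + norm (u1' t))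
                  * (norm (u1 t - u2 t) + norm (xi1 t - xi2 t) + norm (eta1 t - eta2 t)))"
  shows "\<forall>R > 2 * m0 * integral {0..T} (\<lambda>t. a t + b t). \<exists>K > 0.
     \<forall>u1 u1' u2 u2' x01 x02 xi1 xi1' xi2 xi2'.
       W11 T u1 u1' \<and> W11 T u2 u2' \<and>
       integral {0..T} (\<lambda>t. norm (u1' t)) \<le> R / (2 * m0) - integral {0..T} (\<lambda>t. a t + b t) \<and>
       x01 \<in> Zset G (g 0 (u1 0) (u1 0 - x01)) \<and>
       x02 \<in> Zset G (g 0 (u2 0) (u2 0 - x02)) \<and>
       in_Omega T (K1 * \<gamma> / c) \<omega> K1 c a u1 u1' x01 xi1 xi1' \<and>
       in_Omega T (K1 * \<gamma> / c) \<omega> K1 c a u2 u2' x02 xi2 xi2' \<and>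
       sweep_sol G (c / lam) T u1 (\<lambda>t. g t (u1 t) (xi1 t)) x01 xi1 xi1' \<and>
       sweep_sol G (c / lam) T u2 (\<lambda>t. g t (u2 t) (xi2 t)) x02 xi2 xi2'
       \<longrightarrow> integral {0..T} (\<lambda>t. norm (xi1' t - xi2' t))
            \<le> K * (norm (x01 - x02) + norm (u1 0 - u2 0) + integral {0..T} (\<lambda>t. norm (u1' t - u2' t)))"
proof -
  define K where "K R = gronwall_constant (1 - K1 * \<gamma> / c) (2 * (K0 + L * (\<omega> + \<gamma>)) / c) m1
    (nat \<lceil>6 * m0 * (integral {0..T} (\<lambda>t. \<bar>a t\<bar>) + integral {0..T} (\<lambda>t. \<bar>b t\<bar>)
       + (R / (2 * m0) - integral {0..T} (\<lambda>t. a t + b t))) / (1 - K1 * \<gamma> / c)\<rceil>)" for R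
  have K_pos: "K R > 0" for R
    unfolding K_def using hyp_HD(1,2)[OF H] hyp_LD(1)[OF Lh] hyp_gD(8,9)[OF gh] delta m1
    by (intro gronwall_constant_pos) auto
  show ?thesis
    apply (intro allI impI)
    subgoal for R
      by (intro exI[of _ "K R"] conjI K_pos allI impI; (elim conjE)?)
        (unfold K_def, rule state_dependent_sweeping_estimate[OF T H Lh gh delta m0 m1 key]; assumption)
    done
qed

end
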